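(* Let $s>\frac12$, $\sigma_1,\sigma_2<1$ with $\sigma_1+\sigma_2>0$. Let $\Psi$ be a locally bounded function on $\mathbb{R}^3$ satisfying $\Psi(\xi)\le\Psi(\xi-\eta)+\Psi(\eta)$ for all $\xi,\eta\in\mathbb{R}^3$. Assume $a_\Psi\in H^{\sigma_1,s}$ and $b_\Psi\in H^{\sigma_2,s}$. Then there is a constant $C$ depending only on $s,\sigma_1,\sigma_2$ such that $$\|(ab)_\Psi\|_{H^{\sigma_1+\sigma_2-1,s}}\le C\|a_\Psi\|_{H^{\sigma_1,s}}\|b_\Psi\|_{H^{\sigma_2,s}}.$$
   Context: For a function $f$, $f_\Psi=\mathcal F^{-1}(e^{\Psi}\hat f)$. For $\sigma<1$, $s\in\mathbb R$, the anisotropic Sobolev space $H^{\sigma,s}$ consists of tempered distributions $f$ on $\mathbb R^3$ with $\|f\|_{H^{\sigma,s}}^2=\int_{\mathbb{R}^3}|\xi_h|^{2\sigma}(1+|\xi_3|^2)^s|\hat f(\xi)|^2d\xi<\infty$, where $\xi=(\xi_h,\xi_3)$, $\xi_h\in\mathbb R^2$. *)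

theory Defs
  imports "HOL-Analysis.Analysis"
begin

text \<open>Everything is expressed on the Fourier side. A function on R^3 is identified
with its Fourier transform F :: real^3 => complex; xi_h = (xi$1, xi$2), xi_3 = xi$3.\<close>

definition hweight :: "real \<Rightarrow> real \<Rightarrow> real^3 \<Rightarrow> real" where
  "hweight \<sigma> s \<xi> = ((\<xi>$1)\<^sup>2 + (\<xi>$2)\<^sup>2) powr \<sigma> * (1 + (\<xi>$3)\<^sup>2) powr s"

definition Hsq :: "real \<Rightarrow> real \<Rightarrow> (real^3 \<Rightarrow> complex) \<Rightarrow> ennreal" where
  "Hsq \<sigma> s F = (\<integral>\<^sup>+ \<xi>. ennreal (hweight \<sigma> s \<xi> * (cmod (F \<xi>))\<^sup>2) \<partial>lborel)"

definition inH :: "real \<Rightarrow> real \<Rightarrow> (real^3 \<Rightarrow> complex) \<Rightarrow> bool" where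
  "inH \<sigma> s F \<longleftrightarrow> Hsq \<sigma> s F < \<infinity>"

definition Hnorm :: "real \<Rightarrow> real \<Rightarrow> (real^3 \<Rightarrow> complex) \<Rightarrow> real" where
  "Hnorm \<sigma> s F = sqrt (enn2real (Hsq \<sigma> s F))"

text \<open>Fourier transform of f_Psi, given the Fourier transform F of f.\<close>
definition fpsi :: "(real^3 \<Rightarrow> real) \<Rightarrow> (real^3 \<Rightarrow> complex) \<Rightarrow> real^3 \<Rightarrow> complex" where
  "fpsi \<Psi> F \<xi> = complex_of_real (exp (\<Psi> \<xi>)) * F \<xi>"

text \<open>Fourier transform of the product ab: (2 pi)^(-3) times the convolution of the transforms.\<close>
definition prod_hat :: "(real^3 \<Rightarrow> complex) \<Rightarrow> (real^3 \<Rightarrow> complex) \<Rightarrow> real^3 \<Rightarrow> complex" where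
  "prod_hat F G \<xi> = complex_of_real (1 / (2 * pi) ^ 3) * (\<integral> \<eta>. F (\<xi> - \<eta>) * G \<eta> \<partial>lborel)"

definition locally_bounded :: "(real^3 \<Rightarrow> real) \<Rightarrow> bool" where
  "locally_bounded \<Psi> \<longleftrightarrow> (\<forall>K. compact K \<longrightarrow> bounded (\<Psi> ` K))"

end

theory Submission
  imports Defs
begin

text \<open>
  Write A, B for the weighted transforms e^Psi a^, e^Psi b^. Subadditivity of Psi gives
  |e^Psi (ab)^(xi)| <= (2 pi)^-3 int |A(xi - eta)| |B(eta)| d eta, so everything reduces to a
  weighted L^2 bound for the convolution of |A| and |B|. The weight of the product at xi
  factors as the weights of the factors at xi - eta and eta times a product kernel
  K = K_h * K_v (horizontal times vertical), and it suffices to show that sqrt K is a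
  bounded kernel for the bilinear convolution form on L^2 x L^2.

  Splitting the vertical kernel
  into two decay factors and the horizontal region by which factor dominates yields the
  kernel bound; the theorem follows by the pointwise estimate above.
\<close>

lemma nn_integral_reflect:
  fixes h :: "'a::euclidean_space \<Rightarrow> ennreal"
  assumes [measurable]: "h \<in> borel_measurable borel"
  shows "(\<integral>\<^sup>+x. h (c - x) \<partial>lborel) = (\<integral>\<^sup>+x. h x \<partial>lborel)"
proof -
  have "(\<integral>\<^sup>+x. h x \<partial>lborel)
      = (\<integral>\<^sup>+x. h x \<partial>density (distr lborel borel (\<lambda>x. c + (-1) *\<^sub>R x)) (\<lambda>_. \<bar>-1::real\<bar>^DIM('a)))"
    by (subst lborel_affine[of "-1" c, symmetric]) auto
  also have "\<dots> = (\<integral>\<^sup>+x. h (c - x) \<partial>lborel)"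
    by (simp add: nn_integral_density nn_integral_distr)
  finally show ?thesis ..
qed

lemma nn_integral_translate:
  fixes h :: "'a::euclidean_space \<Rightarrow> ennreal"
  assumes [measurable]: "h \<in> borel_measurable borel"
  shows "(\<integral>\<^sup>+x. h (x - v) \<partial>lborel) = (\<integral>\<^sup>+x. h x \<partial>lborel)"
  using nn_integral_distr[of "(+) (-v)" lborel borel h] lborel_distr_plus[of "-v"] by simp

definition horiz :: "real^3 \<Rightarrow> real \<times> real" where
  "horiz x = (x$1, x$2)"

lemma horiz_diff [simp]: "horiz (x - y) = horiz x - horiz y"
  by (simp add: horiz_def)

lemma horiz_measurable [measurable]: "horiz \<in> borel_measurable borel"
  unfolding horiz_def by measurable

definition vert :: "real^3 \<Rightarrow> real" where
  "vert x = x$3"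

lemma vert_diff [simp]: "vert (x - y) = vert x - vert y"
  by (simp add: vert_def)

lemma vert_measurable [measurable]: "vert \<in> borel_measurable borel"
  unfolding vert_def by measurable

lemma norm_horiz_pos: "x$1 \<noteq> 0 \<Longrightarrow> norm (horiz x) > 0"
  by (simp add: horiz_def zero_prod_def)

lemma Basis_vec3: "(Basis :: (real^3) set) = {axis 1 1, axis 2 1, axis 3 1}"
  by (auto simp: Basis_vec_def UNIV_3)

lemma prod_Basis_vec3:
  "(\<Prod>b\<in>(Basis :: (real^3) set). f b) = f (axis 1 1) * (f (axis 2 1) * f (axis 3 1))"
proof -
  have "(1::3) \<noteq> 2" "(1::3) \<noteq> 3" "(2::3) \<noteq> 3" by simp_all
  then have "axis 1 (1::real) \<noteq> (axis 2 1 :: real^3)" "axis 1 (1::real) \<noteq> (axis 3 1 :: real^3)"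
      "axis 2 (1::real) \<noteq> (axis 3 1 :: real^3)"
    by (auto simp: axis_eq_axis)
  then show ?thesis unfolding Basis_vec3 by simp
qed

lemma Basis_prod3: "(Basis :: ((real \<times> real) \<times> real) set) = {((1,0),0), ((0,1),0), ((0,0),1)}"
  by (auto simp: Basis_prod_def zero_prod_def)

text \<open>Lebesgue measure on R^3 is the product of Lebesgue measure on the horizontal plane
  and on the vertical line: the coordinate map is measure preserving, as it maps boxes to
  boxes of the same volume.\<close>
lemma lborel_horiz_vert: "distr (lborel :: (real^3) measure) borel (\<lambda>x. (horiz x, vert x)) = lborel"
proof (rule lborel_eqI[symmetric])
  fix l u :: "(real \<times> real) \<times> real"
  assume le: "\<And>b. b \<in> Basis \<Longrightarrow> l \<bullet> b \<le> u \<bullet> b"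
  obtain l1 l2 l3 where l: "l = ((l1,l2),l3)" by (metis prod.exhaust)
  obtain u1 u2 u3 where u: "u = ((u1,u2),u3)" by (metis prod.exhaust)
  have les: "l1 \<le> u1" "l2 \<le> u2" "l3 \<le> u3"
    using le[of "((1,0),0)"] le[of "((0,1),0)"] le[of "((0,0),1)"] by (auto simp: Basis_prod3 l u)
  have "(\<lambda>x. (horiz x, vert x)) -` box l u = box (vector [l1,l2,l3]) (vector [u1,u2,u3])"
    unfolding set_eq_iff vimage_eq mem_box_cart
    by (auto simp: l u horiz_def vert_def box_def Basis_prod3 forall_3)
  then have "emeasure (distr lborel borel (\<lambda>x. (horiz x, vert x))) (box l u)
      = emeasure lborel (box (vector [l1,l2,l3]) (vector [u1,u2,u3]) :: (real^3) set)"
    by (subst emeasure_distr) auto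
  also have "\<dots> = ennreal ((u1-l1) * (u2-l2) * (u3-l3))"
  proof (subst emeasure_lborel_box_eq, subst if_P)
    show "\<forall>b\<in>Basis. vector [l1,l2,l3] \<bullet> b \<le> (vector [u1,u2,u3] :: real^3) \<bullet> b"
      using les unfolding Basis_vec_def by (auto simp: inner_axis forall_3)
  qed (simp only: prod_Basis_vec3 inner_axis vector_minus_component vector_3 real_inner_1_right mult.assoc)
  also have "\<dots> = (\<Prod>b\<in>Basis. (u - l) \<bullet> b)"
    by (simp add: Basis_prod3 l u mult.assoc)
  finally show "emeasure (distr lborel borel (\<lambda>x. (horiz x, vert x))) (box l u) = (\<Prod>b\<in>Basis. (u - l) \<bullet> b)" .
qed simp

lemma nn_integral_horiz_vert:
  fixes H :: "real \<times> real \<Rightarrow> ennreal" and V :: "real \<Rightarrow> ennreal"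
  assumes [measurable]: "H \<in> borel_measurable borel" "V \<in> borel_measurable borel"
  shows "(\<integral>\<^sup>+x. H (horiz x) * V (vert x - c) \<partial>lborel) = (\<integral>\<^sup>+p. H p \<partial>lborel) * (\<integral>\<^sup>+t. V t \<partial>lborel)"
proof -
  have "(\<lambda>(p, t). H p * V (t - c)) \<in> borel_measurable (borel \<Otimes>\<^sub>M borel)"
    by measurable
  then have [measurable]: "(\<lambda>(p, t). H p * V (t - c)) \<in> borel_measurable borel"
    by (simp add: borel_prod)
  have "(\<integral>\<^sup>+x. H (horiz x) * V (vert x - c) \<partial>lborel) = (\<integral>\<^sup>+q. (\<lambda>(p, t). H p * V (t - c)) q \<partial>lborel)"
    by (subst lborel_horiz_vert[symmetric]) (simp add: nn_integral_distr)
  also have "\<dots> = (\<integral>\<^sup>+q. (\<lambda>(p, t). H p * V (t - c)) q \<partial>(lborel \<Otimes>\<^sub>M lborel))"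
    by (simp add: lborel_prod)
  also have "\<dots> = (\<integral>\<^sup>+p. \<integral>\<^sup>+t. H p * V (t - c) \<partial>lborel \<partial>lborel)"
    using lborel.nn_integral_fst[of "\<lambda>(p, t). H p * V (t - c)"] by simp
  also have "\<dots> = (\<integral>\<^sup>+p. H p * (\<integral>\<^sup>+t. V t \<partial>lborel) \<partial>lborel)"
    by (simp add: nn_integral_cmult nn_integral_translate)
  also have "\<dots> = (\<integral>\<^sup>+p. H p \<partial>lborel) * (\<integral>\<^sup>+t. V t \<partial>lborel)"
    by (simp add: nn_integral_multc)
  finally show ?thesis .
qed

lemma nn_integral_abs_le:
  fixes g :: "real \<Rightarrow> ennreal"
  assumes [measurable]: "g \<in> borel_measurable borel"
  shows "(\<integral>\<^sup>+t. g \<bar>t\<bar> \<partial>lborel) \<le> 2 * (\<integral>\<^sup>+t. g t * indicator {0..} t \<partial>lborel)"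
proof -
  have "(\<integral>\<^sup>+t. g \<bar>t\<bar> \<partial>lborel)
      \<le> (\<integral>\<^sup>+t. g t * indicator {0..} t + g (0 - t) * indicator {0..} (0 - t) \<partial>lborel)"
    by (intro nn_integral_mono) (auto simp: indicator_def)
  also have "\<dots> = (\<integral>\<^sup>+t. g t * indicator {0..} t \<partial>lborel) + (\<integral>\<^sup>+t. g (0 - t) * indicator {0..} (0 - t) \<partial>lborel)"
    by (rule nn_integral_add) auto
  also have "(\<integral>\<^sup>+t. g (0 - t) * indicator {0..} (0 - t) \<partial>lborel) = (\<integral>\<^sup>+t. g t * indicator {0..} t \<partial>lborel)"
    by (rule nn_integral_reflect[where h="\<lambda>t. g t * indicator {0..} t"]) simp
  finally show ?thesis by (simp add: mult_2)
qed

lemma nn_integral_abs_powr_le: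
  fixes q \<rho> :: real assumes q: "q > -1" and \<rho>: "\<rho> \<ge> 0"
  shows "(\<integral>\<^sup>+x. ennreal (\<bar>x\<bar> powr q) * indicator {-\<rho>..\<rho>} x \<partial>lborel) \<le> ennreal (2 * (\<rho> powr (q+1) / (q+1)))"
proof -
  have "(\<integral>\<^sup>+x. ennreal (\<bar>x\<bar> powr q) * indicator {-\<rho>..\<rho>} x \<partial>lborel)
      = (\<integral>\<^sup>+x. (\<lambda>y. ennreal (y powr q) * indicator {..\<rho>} y) \<bar>x\<bar> \<partial>lborel)"
    by (intro nn_integral_cong) (auto simp: indicator_def)
  also have "\<dots> \<le> 2 * (\<integral>\<^sup>+y. ennreal (y powr q) * indicator {..\<rho>} y * indicator {0..} y \<partial>lborel)"
    by (rule nn_integral_abs_le) simp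
  also have "(\<integral>\<^sup>+y. ennreal (y powr q) * indicator {..\<rho>} y * indicator {0..} y \<partial>lborel)
      = (\<integral>\<^sup>+y. ennreal (y powr q) * indicator {0..\<rho>} y \<partial>lborel)"
    by (intro nn_integral_cong) (auto simp: indicator_def)
  also have "\<dots> = ennreal (\<rho> powr (q+1) / (q+1))"
    by (rule nn_integral_has_integral_lebesgue'[OF _ has_integral_powr_from_0[OF q \<rho>]]) auto
  also have "2 * \<dots> = ennreal (2 * (\<rho> powr (q+1) / (q+1)))"
    using q ennreal_mult'[of 2 "\<rho> powr (q+1) / (q+1)"] by simp
  finally show ?thesis .
qed

text \<open>The vertical weight (1 + t^2)^(-s) is integrable for s > 1/2; this is where the
  hypothesis on s enters.\<close>
lemma nn_integral_bracket_finite: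
  fixes s :: real assumes s: "s > 1/2"
  shows "(\<integral>\<^sup>+t. ennreal ((1 + t\<^sup>2) powr (-s)) \<partial>lborel) < \<infinity>"
proof -
  have dom: "ennreal ((1 + t\<^sup>2) powr (-s)) * indicator {0..} t
      \<le> indicator {0..<1} t + ennreal (t powr (- 2 * s)) * indicator {1..} t" for t
  proof (cases "t < 1")
    case True
    have "(1 + t\<^sup>2) powr (-s) \<le> 1"
      using powr_mono2'[of "-s" 1 "1 + t\<^sup>2"] s by simp
    then show ?thesis
      using True by (auto simp: indicator_def ennreal_le_1 intro: add_increasing2)
  next
    case False
    have "(1 + t\<^sup>2) powr (-s) \<le> (t\<^sup>2) powr (-s)"
      using s False by (intro powr_mono2') auto
    also have "(t\<^sup>2) powr (-s) = t powr (- 2 * s)"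
    proof -
      have "t\<^sup>2 = t powr 2" using False by (simp add: powr_realpow)
      then show ?thesis by (simp add: powr_powr)
    qed
    finally show ?thesis
      using False by (auto simp: indicator_def ennreal_leI)
  qed
  have "(\<integral>\<^sup>+t. ennreal ((1 + t\<^sup>2) powr (-s)) \<partial>lborel)
      = (\<integral>\<^sup>+t. (\<lambda>y. ennreal ((1 + y\<^sup>2) powr (-s))) \<bar>t\<bar> \<partial>lborel)"
    by simp
  also have "\<dots> \<le> 2 * (\<integral>\<^sup>+t. ennreal ((1 + t\<^sup>2) powr (-s)) * indicator {0..} t \<partial>lborel)"
    by (rule nn_integral_abs_le) simp
  also have "\<dots> \<le> 2 * (\<integral>\<^sup>+t. indicator {0..<1} t + ennreal (t powr (- 2 * s)) * indicator {1..} t \<partial>lborel)"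
    by (intro mult_left_mono nn_integral_mono dom) simp
  also have "\<dots> = 2 * (1 + ennreal (-1 / (- 2 * s + 1)))"
  proof -
    have "- 2 * s < -1" using s by simp
    from nn_integral_has_integral_lebesgue'[OF _ has_integral_powr_to_inf[OF this, of 1]]
    show ?thesis by (simp add: nn_integral_add)
  qed
  also have "\<dots> < \<infinity>"
    by (simp add: ennreal_mult_less_top)
  finally show ?thesis .
qed

lemma nn_integral_pair_tensor:
  fixes f g :: "real \<Rightarrow> ennreal"
  assumes [measurable]: "f \<in> borel_measurable borel" "g \<in> borel_measurable borel"
  shows "(\<integral>\<^sup>+x. f (fst x) * g (snd x) \<partial>lborel) = (\<integral>\<^sup>+t. f t \<partial>lborel) * (\<integral>\<^sup>+t. g t \<partial>lborel)"
proof -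
  have "(\<integral>\<^sup>+x. f (fst x) * g (snd x) \<partial>lborel) = (\<integral>\<^sup>+x. f (fst x) * g (snd x) \<partial>(lborel \<Otimes>\<^sub>M lborel))"
    by (simp add: lborel_prod)
  also have "\<dots> = (\<integral>\<^sup>+a. f a * (\<integral>\<^sup>+b. g b \<partial>lborel) \<partial>lborel)"
    using lborel.nn_integral_fst[of "\<lambda>x. f (fst x) * g (snd x)"] by (simp add: nn_integral_cmult)
  also have "\<dots> = (\<integral>\<^sup>+t. f t \<partial>lborel) * (\<integral>\<^sup>+t. g t \<partial>lborel)"
    by (simp add: nn_integral_multc)
  finally show ?thesis .
qed

lemma nn_integral_norm_powr_cball:
  fixes p :: real assumes p: "p > -2"
  shows "\<exists>c\<ge>0. \<forall>\<rho>>0. (\<integral>\<^sup>+(x::real\<times>real). ennreal (norm x powr p) * indicator (cball 0 \<rho>) x \<partial>lborel)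
           \<le> ennreal (c * \<rho> powr (p+2))"
proof (cases "p \<ge> 0")
  case True
  show ?thesis
  proof (intro exI[of _ "unit_ball_vol 2"] conjI allI impI)
    fix \<rho> :: real assume \<rho>: "\<rho> > 0"
    have "(\<integral>\<^sup>+(x::real\<times>real). ennreal (norm x powr p) * indicator (cball 0 \<rho>) x \<partial>lborel)
       \<le> (\<integral>\<^sup>+(x::real\<times>real). ennreal (\<rho> powr p) * indicator (cball 0 \<rho>) x \<partial>lborel)"
      using True by (intro nn_integral_mono) (auto simp: indicator_def intro!: powr_mono2)
    also have "\<dots> = ennreal (\<rho> powr p) * ennreal (unit_ball_vol 2 * \<rho> ^ 2)"
      using \<rho> emeasure_cball[of \<rho> "0::real\<times>real"] by (simp add: nn_integral_cmult_indicator power2_eq_square)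
    also have "\<dots> = ennreal (unit_ball_vol 2 * \<rho> powr (p+2))"
      using \<rho> by (simp add: ennreal_mult'[symmetric] powr_add powr_realpow' mult_ac)
    finally show "(\<integral>\<^sup>+(x::real\<times>real). ennreal (norm x powr p) * indicator (cball 0 \<rho>) x \<partial>lborel)
        \<le> ennreal (unit_ball_vol 2 * \<rho> powr (p+2))" .
  qed simp
next
  case False
  text \<open>For negative p, bound |x|^p by |x_1|^(p/2) |x_2|^(p/2) and integrate over a square.\<close>
  define q where "q = p/2"
  have q: "q > -1" "q < 0" using p False by (auto simp: q_def)
  show ?thesis
  proof (intro exI[of _ "4 / (q+1)^2"] conjI allI impI)
    fix \<rho> :: real assume \<rho>: "\<rho> > 0"
    define g where "g t = ennreal (\<bar>t\<bar> powr q) * indicator {-\<rho>..\<rho>} t" for t :: real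
    have AE: "AE x in lborel. fst x \<noteq> (0::real) \<and> snd x \<noteq> (0::real)"
    proof -
      have "AE x in lborel. (x::real\<times>real) \<bullet> (1,0) \<noteq> 0"
        by (rule AE_lborel_inner_neq) (simp add: Basis_prod_def)
      moreover have "AE x in lborel. (x::real\<times>real) \<bullet> (0,1) \<noteq> 0"
        by (rule AE_lborel_inner_neq) (simp add: Basis_prod_def)
      ultimately show ?thesis by eventually_elim (auto simp: inner_prod_def)
    qed
    have "(\<integral>\<^sup>+(x::real\<times>real). ennreal (norm x powr p) * indicator (cball 0 \<rho>) x \<partial>lborel)
       \<le> (\<integral>\<^sup>+x. g (fst x) * g (snd x) \<partial>lborel)"
    proof (intro nn_integral_mono_AE, use AE in eventually_elim)
      case (elim x)
      obtain a b where x: "x = (a,b)" by (cases x)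
      have a: "a \<noteq> 0" and b: "b \<noteq> 0" using elim by (auto simp: x)
      have na: "\<bar>a\<bar> \<le> norm x" and nb: "\<bar>b\<bar> \<le> norm x"
        unfolding x norm_Pair by (auto intro!: real_le_rsqrt)
      have "norm x powr p = norm x powr q * norm x powr q" by (simp add: q_def powr_add[symmetric])
      also have "\<dots> \<le> \<bar>a\<bar> powr q * \<bar>b\<bar> powr q"
        using q a b na nb by (intro mult_mono powr_mono2') auto
      finally have "norm x powr p \<le> \<bar>a\<bar> powr q * \<bar>b\<bar> powr q" .
      then show ?case
        using na nb by (auto simp: x g_def indicator_def ennreal_mult'[symmetric] abs_le_iff intro!: ennreal_leI)
    qed
    also have "\<dots> = (\<integral>\<^sup>+t. g t \<partial>lborel) * (\<integral>\<^sup>+t. g t \<partial>lborel)"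
      by (rule nn_integral_pair_tensor) (simp_all add: g_def)
    also have "\<dots> \<le> ennreal (2 * (\<rho> powr (q+1) / (q+1))) * ennreal (2 * (\<rho> powr (q+1) / (q+1)))"
      unfolding g_def using q \<rho> by (intro mult_mono nn_integral_abs_powr_le) auto
    also have "\<dots> = ennreal (4 / (q+1)^2 * \<rho> powr (p+2))"
    proof -
      have "\<rho> powr (q+1) * \<rho> powr (q+1) = \<rho> powr (p+2)" by (simp add: q_def powr_add[symmetric])
      then show ?thesis using q \<rho> by (simp add: ennreal_mult'[symmetric] power2_eq_square field_simps)
    qed
    finally show "(\<integral>\<^sup>+(x::real\<times>real). ennreal (norm x powr p) * indicator (cball 0 \<rho>) x \<partial>lborel)
        \<le> ennreal (4 / (q+1)^2 * \<rho> powr (p+2))" .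
  qed simp
qed

text \<open>The horizontal part of the kernel relating the three weights
  |xi_h|^(2(sigma+tau-1)), |xi_h - eta_h|^(2 sigma), |eta_h|^(2 tau).\<close>
definition hkern :: "real \<Rightarrow> real \<Rightarrow> real \<times> real \<Rightarrow> real \<times> real \<Rightarrow> real" where
  "hkern \<sigma> \<tau> u v = norm u powr (2*(\<sigma>+\<tau>-1)) * norm (u - v) powr (-2*\<sigma>) * norm v powr (-2*\<tau>)"

lemma hkern_nonneg: "hkern \<sigma> \<tau> u v \<ge> 0"
  by (simp add: hkern_def)

lemma hkern_measurable [measurable]:
  "(\<lambda>(u, v). hkern \<sigma> \<tau> u v) \<in> borel_measurable (borel \<Otimes>\<^sub>M borel)"
  unfolding hkern_def by measurable

definition hkern_near :: "real \<Rightarrow> real \<Rightarrow> real \<times> real \<Rightarrow> real \<times> real \<Rightarrow> real" where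
  "hkern_near \<sigma> \<tau> u v = (if norm (u - v) \<le> norm v then hkern \<sigma> \<tau> u v else 0)"

lemma hkern_near_nonneg: "hkern_near \<sigma> \<tau> u v \<ge> 0"
  by (simp add: hkern_near_def hkern_nonneg)

lemma hkern_near_measurable [measurable]:
  "(\<lambda>(u, v). hkern_near \<sigma> \<tau> u v) \<in> borel_measurable (borel \<Otimes>\<^sub>M borel)"
  unfolding hkern_near_def by measurable

lemma powr_annulus_le:
  fixes r x e :: real assumes r: "0 < r" and x: "r/2 \<le> x" "x \<le> 2*r"
  shows "x powr e \<le> 2 powr \<bar>e\<bar> * r powr e"
proof (cases "e \<ge> 0")
  case True
  have "x powr e \<le> (2*r) powr e" using True x r by (intro powr_mono2) auto
  also have "\<dots> = 2 powr \<bar>e\<bar> * r powr e" using True by (simp add: powr_mult)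
  finally show ?thesis .
next
  case False
  have "x powr e \<le> (r/2) powr e" using False x r powr_mono2'[of e "r/2" x] by linarith
  also have "\<dots> = 2 powr \<bar>e\<bar> * r powr e"
    using False by (simp add: powr_divide powr_minus_divide)
  finally show ?thesis .
qed

text \<open>In the region |u - v| <= |v| the kernel is dominated by a pure power of |u - v| near v
  (where |u| is comparable to |v|) plus a pure power of |u| on a disc of radius 2|v|
  (where |u - v| is comparable to |v|).\<close>
lemma hkern_near_le:
  fixes u v :: "real \<times> real" and \<sigma> \<tau> :: real
  assumes near: "norm (u - v) \<le> norm v"
  defines "r \<equiv> norm v" and "a \<equiv> \<sigma> + \<tau> - 1"
  shows "hkern \<sigma> \<tau> u v
      \<le> 2 powr \<bar>2*a\<bar> * r powr (2*a - 2*\<tau>) * (norm (u - v) powr (-2*\<sigma>) * indicator (cball 0 (r/2)) (u - v))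
       + 2 powr \<bar>-2*\<sigma>\<bar> * r powr (-2*\<sigma> - 2*\<tau>) * (norm u powr (2*a) * indicator (cball 0 (2*r)) u)"
    (is "_ \<le> ?K1 * ?X + ?K2 * ?Y")
proof (cases "r = 0")
  case True
  then show ?thesis using near by (simp add: r_def hkern_def)
next
  case False
  then have r: "r > 0" by (simp add: r_def)
  have nonneg: "0 \<le> ?K1 * ?X" "0 \<le> ?K2 * ?Y" by simp_all
  have tri1: "norm u \<le> norm (u - v) + r" using norm_triangle_ineq[of "u - v" v] by (simp add: r_def)
  have tri2: "r \<le> norm u + norm (u - v)"
    using norm_triangle_ineq[of u "v - u"] by (simp add: r_def norm_minus_commute)
  have split: "hkern \<sigma> \<tau> u v = norm u powr (2*a) * norm (u - v) powr (-2*\<sigma>) * r powr (-2*\<tau>)"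
    by (simp add: hkern_def r_def a_def)
  show ?thesis
  proof (cases "norm (u - v) \<le> r/2")
    case True
    have "norm u powr (2*a) \<le> 2 powr \<bar>2*a\<bar> * r powr (2*a)"
      using tri1 tri2 True r by (intro powr_annulus_le) auto
    then have "hkern \<sigma> \<tau> u v \<le> (2 powr \<bar>2*a\<bar> * r powr (2*a)) * norm (u - v) powr (-2*\<sigma>) * r powr (-2*\<tau>)"
      unfolding split by (intro mult_right_mono) auto
    also have "\<dots> = ?K1 * ?X"
      using True by (simp add: powr_add[symmetric] indicator_def mult_ac)
    finally show ?thesis using nonneg by linarith
  next
    case False
    have "norm (u - v) powr (-2*\<sigma>) \<le> 2 powr \<bar>-2*\<sigma>\<bar> * r powr (-2*\<sigma>)"
      using False near r by (intro powr_annulus_le) (auto simp: r_def)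
    then have "hkern \<sigma> \<tau> u v \<le> norm u powr (2*a) * (2 powr \<bar>-2*\<sigma>\<bar> * r powr (-2*\<sigma>)) * r powr (-2*\<tau>)"
      unfolding split by (intro mult_right_mono mult_left_mono) auto
    also have "\<dots> = ?K2 * ?Y"
      using tri1 near by (simp add: powr_add[symmetric] indicator_def mult_ac r_def)
    finally show ?thesis using nonneg by linarith
  qed
qed

lemma cball_borel [measurable]: "cball (c::'a::euclidean_space) r \<in> sets borel"
  by (simp add: borel_closed)

text \<open>The integral of the horizontal kernel over the near region is bounded uniformly
  in v: both pieces of the domination above are homogeneous of degree 0 in |v|.
  Local integrability needs sigma < 1 and sigma + tau > 0.\<close>
lemma hkern_near_integral_bounded:
  assumes \<sigma>: "\<sigma> < 1" and \<sigma>\<tau>: "\<sigma> + \<tau> > 0"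
  shows "\<exists>C. \<forall>v. (\<integral>\<^sup>+u. ennreal (hkern_near \<sigma> \<tau> u v) \<partial>lborel) \<le> ennreal C"
proof -
  define a where "a = \<sigma> + \<tau> - 1"
  obtain c1 where c1: "c1 \<ge> 0" "\<And>\<rho>. \<rho> > 0 \<Longrightarrow>
      (\<integral>\<^sup>+(x::real\<times>real). ennreal (norm x powr (-2*\<sigma>)) * indicator (cball 0 \<rho>) x \<partial>lborel) \<le> ennreal (c1 * \<rho> powr (-2*\<sigma>+2))"
    using nn_integral_norm_powr_cball[of "-2*\<sigma>"] \<sigma> by auto
  obtain c2 where c2: "c2 \<ge> 0" "\<And>\<rho>. \<rho> > 0 \<Longrightarrow>
      (\<integral>\<^sup>+(x::real\<times>real). ennreal (norm x powr (2*a)) * indicator (cball 0 \<rho>) x \<partial>lborel) \<le> ennreal (c2 * \<rho> powr (2*a+2))"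
    using nn_integral_norm_powr_cball[of "2*a"] \<sigma>\<tau> by (auto simp: a_def)
  define K1 where "K1 = 2 powr \<bar>2*a\<bar>"
  define K2 where "K2 = 2 powr \<bar>-2*\<sigma>\<bar>"
  define C where "C = K1 * c1 * (1/2) powr (-2*\<sigma>+2) + K2 * c2 * 2 powr (2*a+2)"
  show ?thesis
  proof (intro exI[of _ C] allI)
    fix v :: "real \<times> real"
    define r where "r = norm v"
    show "(\<integral>\<^sup>+u. ennreal (hkern_near \<sigma> \<tau> u v) \<partial>lborel) \<le> ennreal C"
    proof (cases "r = 0")
      case True
      moreover have "hkern_near \<sigma> \<tau> u 0 = 0" for u by (simp add: hkern_near_def hkern_def)
      ultimately show ?thesis by (simp add: r_def)
    next
      case False
      then have r: "r > 0" by (simp add: r_def)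
      define A1 where "A1 = K1 * r powr (2*a - 2*\<tau>)"
      define A2 where "A2 = K2 * r powr (-2*\<sigma> - 2*\<tau>)"
      have A0: "A1 \<ge> 0" "A2 \<ge> 0" by (auto simp: A1_def A2_def K1_def K2_def)
      have [measurable]: "Measurable.pred borel (\<lambda>u. u - v \<in> cball 0 (r/2))"
        unfolding mem_cball_0 by measurable
      have "(\<integral>\<^sup>+u. ennreal (hkern_near \<sigma> \<tau> u v) \<partial>lborel)
          \<le> (\<integral>\<^sup>+u. ennreal A1 * (ennreal (norm (u - v) powr (-2*\<sigma>)) * indicator (cball 0 (r/2)) (u - v))
              + ennreal A2 * (ennreal (norm u powr (2*a)) * indicator (cball 0 (2*r)) u) \<partial>lborel)"
      proof (intro nn_integral_mono)
        fix u
        show "ennreal (hkern_near \<sigma> \<tau> u v)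
          \<le> ennreal A1 * (ennreal (norm (u - v) powr (-2*\<sigma>)) * indicator (cball 0 (r/2)) (u - v))
            + ennreal A2 * (ennreal (norm u powr (2*a)) * indicator (cball 0 (2*r)) u)"
          using hkern_near_le[of u v \<sigma> \<tau>] A0
          by (cases "norm (u - v) \<le> norm v")
             (auto simp: hkern_near_def indicator_def A1_def A2_def K1_def K2_def a_def r_def
               ennreal_mult'[symmetric] ennreal_plus[symmetric] ennreal_neg
               simp del: ennreal_plus intro!: ennreal_leI)
      qed
      also have "\<dots> = ennreal A1 * (\<integral>\<^sup>+u. ennreal (norm (u - v) powr (-2*\<sigma>)) * indicator (cball 0 (r/2)) (u - v) \<partial>lborel)
          + ennreal A2 * (\<integral>\<^sup>+(u::real\<times>real). ennreal (norm u powr (2*a)) * indicator (cball 0 (2*r)) u \<partial>lborel)"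
        by (subst nn_integral_add; measurable?) (subst nn_integral_cmult, measurable)+
      also have "(\<integral>\<^sup>+u. ennreal (norm (u - v) powr (-2*\<sigma>)) * indicator (cball 0 (r/2)) (u - v) \<partial>lborel)
          = (\<integral>\<^sup>+(u::real\<times>real). ennreal (norm u powr (-2*\<sigma>)) * indicator (cball 0 (r/2)) u \<partial>lborel)"
        by (rule nn_integral_translate[where h="\<lambda>u. ennreal (norm u powr (-2*\<sigma>)) * indicator (cball 0 (r/2)) u"]) simp
      also have "ennreal A1 * \<dots> + ennreal A2 * (\<integral>\<^sup>+(u::real\<times>real). ennreal (norm u powr (2*a)) * indicator (cball 0 (2*r)) u \<partial>lborel)
          \<le> ennreal A1 * ennreal (c1 * (r/2) powr (-2*\<sigma>+2)) + ennreal A2 * ennreal (c2 * (2*r) powr (2*a+2))"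
        using r by (intro add_mono mult_left_mono c1(2) c2(2)) auto
      also have "\<dots> = ennreal C"
      proof -
        have e1: "A1 * (c1 * (r/2) powr (-2*\<sigma>+2)) = K1 * c1 * (1/2) powr (-2*\<sigma>+2) * r powr (2*a - 2*\<tau> + (-2*\<sigma>+2))"
        proof -
          have "(r/2) powr (-2*\<sigma>+2) = r powr (-2*\<sigma>+2) * (1/2) powr (-2*\<sigma>+2)"
            using powr_mult[of r "1/2" "-2*\<sigma>+2"] by simp
          then show ?thesis unfolding A1_def by (simp only: powr_add mult_ac)
        qed
        have e2: "A2 * (c2 * (2*r) powr (2*a+2)) = K2 * c2 * 2 powr (2*a+2) * r powr (-2*\<sigma> - 2*\<tau> + (2*a+2))"
          unfolding A2_def powr_mult[of 2 r] by (simp only: powr_add mult_ac)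
        have z: "2*a - 2*\<tau> + (-2*\<sigma>+2) = 0" "-2*\<sigma> - 2*\<tau> + (2*a+2) = 0"
          by (auto simp: a_def)
        have "A1 * (c1 * (r/2) powr (-2*\<sigma>+2)) + A2 * (c2 * (2*r) powr (2*a+2)) = C"
          unfolding e1 e2 z C_def using r by simp
        then show ?thesis using A0 c1(1) c2(1)
          by (simp add: ennreal_mult'[symmetric] ennreal_plus[symmetric] del: ennreal_plus)
      qed
      finally show ?thesis .
    qed
  qed
qed

definition kernel_bounded :: "('a::euclidean_space \<Rightarrow> 'a \<Rightarrow> ennreal) \<Rightarrow> ennreal \<Rightarrow> bool" where
  "kernel_bounded k C \<longleftrightarrow> (\<forall>F G. F \<in> borel_measurable borel \<longrightarrow> G \<in> borel_measurable borel \<longrightarrow>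
     (\<integral>\<^sup>+\<xi>. (\<integral>\<^sup>+\<eta>. F (\<xi> - \<eta>) * G \<eta> * k \<xi> \<eta> \<partial>lborel)\<^sup>2 \<partial>lborel)
       \<le> C * (\<integral>\<^sup>+\<zeta>. (F \<zeta>)\<^sup>2 \<partial>lborel) * (\<integral>\<^sup>+\<eta>. (G \<eta>)\<^sup>2 \<partial>lborel))"

lemma kernel_boundedD:
  "kernel_bounded k C \<Longrightarrow> F \<in> borel_measurable borel \<Longrightarrow> G \<in> borel_measurable borel \<Longrightarrow>
    (\<integral>\<^sup>+\<xi>. (\<integral>\<^sup>+\<eta>. F (\<xi> - \<eta>) * G \<eta> * k \<xi> \<eta> \<partial>lborel)\<^sup>2 \<partial>lborel)
       \<le> C * (\<integral>\<^sup>+\<zeta>. (F \<zeta>)\<^sup>2 \<partial>lborel) * (\<integral>\<^sup>+\<eta>. (G \<eta>)\<^sup>2 \<partial>lborel)"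
  unfolding kernel_bounded_def by blast

text \<open>Proof: Cauchy-Schwarz in eta, substitute
  zeta = xi - eta, and integrate in xi first (Tonelli).\<close>
lemma kernel_bounded_schur:
  fixes p q :: "'a::euclidean_space \<Rightarrow> 'a \<Rightarrow> ennreal"
  assumes [measurable]: "(\<lambda>(x, y). p x y) \<in> borel_measurable (borel \<Otimes>\<^sub>M borel)"
    "(\<lambda>(x, y). q x y) \<in> borel_measurable (borel \<Otimes>\<^sub>M borel)"
  and mixed: "\<And>\<zeta> \<eta>. (\<integral>\<^sup>+\<xi>. (p \<xi> (\<xi> - \<zeta>))\<^sup>2 * (q \<xi> \<eta>)\<^sup>2 \<partial>lborel) \<le> B"
  shows "kernel_bounded (\<lambda>\<xi> \<eta>. p \<xi> \<eta> * q \<xi> \<eta>) B"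
  unfolding kernel_bounded_def
proof (intro allI impI)
  fix F G :: "'a \<Rightarrow> ennreal"
  assume [measurable]: "F \<in> borel_measurable borel" "G \<in> borel_measurable borel"
  define W where "W \<xi> \<zeta> \<eta> = ((F \<zeta>)\<^sup>2 * (p \<xi> (\<xi> - \<zeta>))\<^sup>2) * ((G \<eta>)\<^sup>2 * (q \<xi> \<eta>)\<^sup>2)" for \<xi> \<zeta> \<eta>
  have [measurable]: "(\<lambda>(\<xi>, \<zeta>, \<eta>). W \<xi> \<zeta> \<eta>) \<in> borel_measurable (lborel \<Otimes>\<^sub>M (lborel \<Otimes>\<^sub>M lborel))"
    "(\<lambda>x. W (fst (fst x)) (snd (fst x)) (snd x)) \<in> borel_measurable ((borel \<Otimes>\<^sub>M borel) \<Otimes>\<^sub>M borel)"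
    unfolding W_def by measurable
  have CS: "(\<integral>\<^sup>+\<eta>. F (\<xi> - \<eta>) * G \<eta> * (p \<xi> \<eta> * q \<xi> \<eta>) \<partial>lborel)\<^sup>2
      \<le> (\<integral>\<^sup>+\<zeta>. \<integral>\<^sup>+\<eta>. W \<xi> \<zeta> \<eta> \<partial>lborel \<partial>lborel)" for \<xi>
  proof -
    have "(\<integral>\<^sup>+\<eta>. F (\<xi> - \<eta>) * G \<eta> * (p \<xi> \<eta> * q \<xi> \<eta>) \<partial>lborel)\<^sup>2
        = (\<integral>\<^sup>+\<eta>. (F (\<xi> - \<eta>) * p \<xi> \<eta>) * (G \<eta> * q \<xi> \<eta>) \<partial>lborel)\<^sup>2"
      by (simp add: mult_ac)
    also have "\<dots> \<le> (\<integral>\<^sup>+\<eta>. (F (\<xi> - \<eta>) * p \<xi> \<eta>)\<^sup>2 \<partial>lborel) * (\<integral>\<^sup>+\<eta>. (G \<eta> * q \<xi> \<eta>)\<^sup>2 \<partial>lborel)"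
      by (rule Cauchy_Schwarz_nn_integral) measurable
    also have "(\<integral>\<^sup>+\<eta>. (F (\<xi> - \<eta>) * p \<xi> \<eta>)\<^sup>2 \<partial>lborel) = (\<integral>\<^sup>+\<zeta>. (F \<zeta>)\<^sup>2 * (p \<xi> (\<xi> - \<zeta>))\<^sup>2 \<partial>lborel)"
      using nn_integral_reflect[of "\<lambda>\<eta>. (F (\<xi> - \<eta>) * p \<xi> \<eta>)\<^sup>2" \<xi>] by (simp add: power_mult_distrib)
    also have "\<dots> * (\<integral>\<^sup>+\<eta>. (G \<eta> * q \<xi> \<eta>)\<^sup>2 \<partial>lborel) = (\<integral>\<^sup>+\<zeta>. \<integral>\<^sup>+\<eta>. W \<xi> \<zeta> \<eta> \<partial>lborel \<partial>lborel)"
      unfolding W_def power_mult_distrib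
      by (subst nn_integral_multc[symmetric], measurable) (simp add: nn_integral_cmult)
    finally show ?thesis .
  qed
  have inner: "(\<integral>\<^sup>+\<xi>. W \<xi> \<zeta> \<eta> \<partial>lborel) \<le> B * ((F \<zeta>)\<^sup>2 * (G \<eta>)\<^sup>2)" for \<zeta> \<eta>
  proof -
    have "(\<integral>\<^sup>+\<xi>. W \<xi> \<zeta> \<eta> \<partial>lborel) = ((F \<zeta>)\<^sup>2 * (G \<eta>)\<^sup>2) * (\<integral>\<^sup>+\<xi>. (p \<xi> (\<xi> - \<zeta>))\<^sup>2 * (q \<xi> \<eta>)\<^sup>2 \<partial>lborel)"
      unfolding W_def by (subst nn_integral_cmult[symmetric]) (measurable, simp add: mult_ac)
    also have "\<dots> \<le> ((F \<zeta>)\<^sup>2 * (G \<eta>)\<^sup>2) * B"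
      by (intro mult_left_mono mixed) simp
    finally show ?thesis by (simp add: mult_ac)
  qed
  have "(\<integral>\<^sup>+\<xi>. (\<integral>\<^sup>+\<eta>. F (\<xi> - \<eta>) * G \<eta> * (p \<xi> \<eta> * q \<xi> \<eta>) \<partial>lborel)\<^sup>2 \<partial>lborel)
      \<le> (\<integral>\<^sup>+\<xi>. \<integral>\<^sup>+\<zeta>. \<integral>\<^sup>+\<eta>. W \<xi> \<zeta> \<eta> \<partial>lborel \<partial>lborel \<partial>lborel)"
    by (intro nn_integral_mono CS)
  also have "\<dots> = (\<integral>\<^sup>+\<zeta>. \<integral>\<^sup>+\<xi>. \<integral>\<^sup>+\<eta>. W \<xi> \<zeta> \<eta> \<partial>lborel \<partial>lborel \<partial>lborel)"
    by (rule lborel_pair.Fubini'[symmetric]) measurable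
  also have "\<dots> = (\<integral>\<^sup>+\<zeta>. \<integral>\<^sup>+\<eta>. \<integral>\<^sup>+\<xi>. W \<xi> \<zeta> \<eta> \<partial>lborel \<partial>lborel \<partial>lborel)"
    by (intro nn_integral_cong lborel_pair.Fubini'[symmetric]) (unfold W_def, measurable)
  also have "\<dots> \<le> (\<integral>\<^sup>+\<zeta>. \<integral>\<^sup>+\<eta>. B * ((F \<zeta>)\<^sup>2 * (G \<eta>)\<^sup>2) \<partial>lborel \<partial>lborel)"
    by (intro nn_integral_mono inner)
  also have "\<dots> = B * (\<integral>\<^sup>+\<zeta>. (F \<zeta>)\<^sup>2 \<partial>lborel) * (\<integral>\<^sup>+\<eta>. (G \<eta>)\<^sup>2 \<partial>lborel)"
    by (simp add: nn_integral_cmult nn_integral_multc mult.assoc)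
  finally show "(\<integral>\<^sup>+\<xi>. (\<integral>\<^sup>+\<eta>. F (\<xi> - \<eta>) * G \<eta> * (p \<xi> \<eta> * q \<xi> \<eta>) \<partial>lborel)\<^sup>2 \<partial>lborel)
      \<le> B * (\<integral>\<^sup>+\<zeta>. (F \<zeta>)\<^sup>2 \<partial>lborel) * (\<integral>\<^sup>+\<eta>. (G \<eta>)\<^sup>2 \<partial>lborel)" .
qed

lemma kernel_bounded_mono:
  assumes "kernel_bounded k' C" and "\<And>\<xi> \<eta>. k \<xi> \<eta> \<le> k' \<xi> \<eta>"
  shows "kernel_bounded k C"
  unfolding kernel_bounded_def
proof (intro allI impI)
  fix F G :: "'a \<Rightarrow> ennreal"
  assume F: "F \<in> borel_measurable borel" and G: "G \<in> borel_measurable borel"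
  have "(\<integral>\<^sup>+\<xi>. (\<integral>\<^sup>+\<eta>. F (\<xi> - \<eta>) * G \<eta> * k \<xi> \<eta> \<partial>lborel)\<^sup>2 \<partial>lborel)
      \<le> (\<integral>\<^sup>+\<xi>. (\<integral>\<^sup>+\<eta>. F (\<xi> - \<eta>) * G \<eta> * k' \<xi> \<eta> \<partial>lborel)\<^sup>2 \<partial>lborel)"
    using assms(2) by (intro nn_integral_mono power_mono_ennreal mult_left_mono) auto
  also have "\<dots> \<le> C * (\<integral>\<^sup>+\<zeta>. (F \<zeta>)\<^sup>2 \<partial>lborel) * (\<integral>\<^sup>+\<eta>. (G \<eta>)\<^sup>2 \<partial>lborel)"
    using kernel_boundedD[OF assms(1) F G] .
  finally show "(\<integral>\<^sup>+\<xi>. (\<integral>\<^sup>+\<eta>. F (\<xi> - \<eta>) * G \<eta> * k \<xi> \<eta> \<partial>lborel)\<^sup>2 \<partial>lborel)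
      \<le> C * (\<integral>\<^sup>+\<zeta>. (F \<zeta>)\<^sup>2 \<partial>lborel) * (\<integral>\<^sup>+\<eta>. (G \<eta>)\<^sup>2 \<partial>lborel)" .
qed

lemma kernel_bounded_cmult:
  assumes "kernel_bounded k C" and [measurable]: "(\<lambda>(x, y). k x y) \<in> borel_measurable (borel \<Otimes>\<^sub>M borel)"
  shows "kernel_bounded (\<lambda>\<xi> \<eta>. c * k \<xi> \<eta>) (c\<^sup>2 * C)"
  unfolding kernel_bounded_def
proof (intro allI impI)
  fix F G :: "'a \<Rightarrow> ennreal"
  assume F[measurable]: "F \<in> borel_measurable borel" and G[measurable]: "G \<in> borel_measurable borel"
  have "(\<integral>\<^sup>+\<eta>. F (\<xi> - \<eta>) * G \<eta> * (c * k \<xi> \<eta>) \<partial>lborel)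
      = c * (\<integral>\<^sup>+\<eta>. F (\<xi> - \<eta>) * G \<eta> * k \<xi> \<eta> \<partial>lborel)" for \<xi>
  proof -
    have "(\<lambda>\<eta>. F (\<xi> - \<eta>) * G \<eta> * k \<xi> \<eta>) \<in> borel_measurable lborel" by measurable
    from nn_integral_cmult[OF this, of c] show ?thesis by (simp add: mult_ac)
  qed
  then have "(\<integral>\<^sup>+\<xi>. (\<integral>\<^sup>+\<eta>. F (\<xi> - \<eta>) * G \<eta> * (c * k \<xi> \<eta>) \<partial>lborel)\<^sup>2 \<partial>lborel)
      = (\<integral>\<^sup>+\<xi>. c\<^sup>2 * (\<integral>\<^sup>+\<eta>. F (\<xi> - \<eta>) * G \<eta> * k \<xi> \<eta> \<partial>lborel)\<^sup>2 \<partial>lborel)"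
    by (simp add: power_mult_distrib)
  also have "\<dots> = c\<^sup>2 * (\<integral>\<^sup>+\<xi>. (\<integral>\<^sup>+\<eta>. F (\<xi> - \<eta>) * G \<eta> * k \<xi> \<eta> \<partial>lborel)\<^sup>2 \<partial>lborel)"
    by (rule nn_integral_cmult) measurable
  also have "\<dots> \<le> c\<^sup>2 * (C * (\<integral>\<^sup>+\<zeta>. (F \<zeta>)\<^sup>2 \<partial>lborel) * (\<integral>\<^sup>+\<eta>. (G \<eta>)\<^sup>2 \<partial>lborel))"
    by (intro mult_left_mono kernel_boundedD[OF assms(1) F G]) simp
  finally show "(\<integral>\<^sup>+\<xi>. (\<integral>\<^sup>+\<eta>. F (\<xi> - \<eta>) * G \<eta> * (c * k \<xi> \<eta>) \<partial>lborel)\<^sup>2 \<partial>lborel)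
      \<le> c\<^sup>2 * C * (\<integral>\<^sup>+\<zeta>. (F \<zeta>)\<^sup>2 \<partial>lborel) * (\<integral>\<^sup>+\<eta>. (G \<eta>)\<^sup>2 \<partial>lborel)"
    by (simp add: mult.assoc)
qed

lemma sq_add_le_ennreal: "((a::ennreal) + b)\<^sup>2 \<le> 2 * (a\<^sup>2 + b\<^sup>2)"
proof -
  have "2 * a * b \<le> a\<^sup>2 + b\<^sup>2" by (rule sum_of_squares_ge_ennreal)
  then have "(a + b)\<^sup>2 \<le> a\<^sup>2 + b\<^sup>2 + (a\<^sup>2 + b\<^sup>2)"
    by (simp add: power2_sum add_mono add.assoc add.left_commute add.commute)
  also have "\<dots> = 2 * (a\<^sup>2 + b\<^sup>2)"
    by (simp only: mult_2)
  finally show ?thesis .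
qed

lemma kernel_bounded_add:
  assumes "kernel_bounded k1 C1" "kernel_bounded k2 C2"
    and [measurable]: "(\<lambda>(x, y). k1 x y) \<in> borel_measurable (borel \<Otimes>\<^sub>M borel)"
      "(\<lambda>(x, y). k2 x y) \<in> borel_measurable (borel \<Otimes>\<^sub>M borel)"
  shows "kernel_bounded (\<lambda>\<xi> \<eta>. k1 \<xi> \<eta> + k2 \<xi> \<eta>) (2 * (C1 + C2))"
  unfolding kernel_bounded_def
proof (intro allI impI)
  fix F G :: "'a \<Rightarrow> ennreal"
  assume F[measurable]: "F \<in> borel_measurable borel" and G[measurable]: "G \<in> borel_measurable borel"
  define T where "T k \<xi> = (\<integral>\<^sup>+\<eta>. F (\<xi> - \<eta>) * G \<eta> * k \<xi> \<eta> \<partial>lborel)" for k and \<xi> :: 'a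
  have [measurable]: "T k1 \<in> borel_measurable borel" "T k2 \<in> borel_measurable borel"
    unfolding T_def by measurable
  have "(\<integral>\<^sup>+\<xi>. (\<integral>\<^sup>+\<eta>. F (\<xi> - \<eta>) * G \<eta> * (k1 \<xi> \<eta> + k2 \<xi> \<eta>) \<partial>lborel)\<^sup>2 \<partial>lborel)
      = (\<integral>\<^sup>+\<xi>. (T k1 \<xi> + T k2 \<xi>)\<^sup>2 \<partial>lborel)"
    unfolding T_def by (simp add: distrib_left nn_integral_add)
  also have "\<dots> \<le> (\<integral>\<^sup>+\<xi>. 2 * ((T k1 \<xi>)\<^sup>2 + (T k2 \<xi>)\<^sup>2) \<partial>lborel)"
    by (intro nn_integral_mono sq_add_le_ennreal)
  also have "\<dots> = 2 * ((\<integral>\<^sup>+\<xi>. (T k1 \<xi>)\<^sup>2 \<partial>lborel) + (\<integral>\<^sup>+\<xi>. (T k2 \<xi>)\<^sup>2 \<partial>lborel))"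
    by (simp add: nn_integral_cmult nn_integral_add)
  also have "\<dots> \<le> 2 * (C1 * (\<integral>\<^sup>+\<zeta>. (F \<zeta>)\<^sup>2 \<partial>lborel) * (\<integral>\<^sup>+\<eta>. (G \<eta>)\<^sup>2 \<partial>lborel)
      + C2 * (\<integral>\<^sup>+\<zeta>. (F \<zeta>)\<^sup>2 \<partial>lborel) * (\<integral>\<^sup>+\<eta>. (G \<eta>)\<^sup>2 \<partial>lborel))"
    unfolding T_def by (intro mult_left_mono add_mono kernel_boundedD[OF assms(1) F G] kernel_boundedD[OF assms(2) F G]) simp
  finally show "(\<integral>\<^sup>+\<xi>. (\<integral>\<^sup>+\<eta>. F (\<xi> - \<eta>) * G \<eta> * (k1 \<xi> \<eta> + k2 \<xi> \<eta>) \<partial>lborel)\<^sup>2 \<partial>lborel)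
      \<le> 2 * (C1 + C2) * (\<integral>\<^sup>+\<zeta>. (F \<zeta>)\<^sup>2 \<partial>lborel) * (\<integral>\<^sup>+\<eta>. (G \<eta>)\<^sup>2 \<partial>lborel)"
    by (simp add: distrib_right mult.assoc)
qed

lemma kernel_bounded_reflect:
  assumes "kernel_bounded k C" and [measurable]: "(\<lambda>(x, y). k x y) \<in> borel_measurable (borel \<Otimes>\<^sub>M borel)"
  shows "kernel_bounded (\<lambda>\<xi> \<eta>. k \<xi> (\<xi> - \<eta>)) C"
  unfolding kernel_bounded_def
proof (intro allI impI)
  fix F G :: "'a \<Rightarrow> ennreal"
  assume F[measurable]: "F \<in> borel_measurable borel" and G[measurable]: "G \<in> borel_measurable borel"
  have "(\<integral>\<^sup>+\<eta>. F (\<xi> - \<eta>) * G \<eta> * k \<xi> (\<xi> - \<eta>) \<partial>lborel) = (\<integral>\<^sup>+\<eta>. G (\<xi> - \<eta>) * F \<eta> * k \<xi> \<eta> \<partial>lborel)" for \<xi>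
    using nn_integral_reflect[of "\<lambda>\<eta>. G (\<xi> - \<eta>) * F \<eta> * k \<xi> \<eta>" \<xi>] by (simp add: mult_ac)
  then have "(\<integral>\<^sup>+\<xi>. (\<integral>\<^sup>+\<eta>. F (\<xi> - \<eta>) * G \<eta> * k \<xi> (\<xi> - \<eta>) \<partial>lborel)\<^sup>2 \<partial>lborel)
      = (\<integral>\<^sup>+\<xi>. (\<integral>\<^sup>+\<eta>. G (\<xi> - \<eta>) * F \<eta> * k \<xi> \<eta> \<partial>lborel)\<^sup>2 \<partial>lborel)"
    by simp
  also have "\<dots> \<le> C * (\<integral>\<^sup>+\<zeta>. (G \<zeta>)\<^sup>2 \<partial>lborel) * (\<integral>\<^sup>+\<eta>. (F \<eta>)\<^sup>2 \<partial>lborel)"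
    using kernel_boundedD[OF assms(1) G F] .
  finally show "(\<integral>\<^sup>+\<xi>. (\<integral>\<^sup>+\<eta>. F (\<xi> - \<eta>) * G \<eta> * k \<xi> (\<xi> - \<eta>) \<partial>lborel)\<^sup>2 \<partial>lborel)
      \<le> C * (\<integral>\<^sup>+\<zeta>. (F \<zeta>)\<^sup>2 \<partial>lborel) * (\<integral>\<^sup>+\<eta>. (G \<eta>)\<^sup>2 \<partial>lborel)"
    by (simp add: mult_ac)
qed

text \<open>Vertical decay factor (1 + t^2)^(-s) and the vertical part of the kernel relating the
  weights (1 + x^2)^s, (1 + (x - y)^2)^s and (1 + y^2)^s.\<close>
definition vdecay :: "real \<Rightarrow> real \<Rightarrow> real" where
  "vdecay s t = (1 + t\<^sup>2) powr (-s)"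

definition vkern :: "real \<Rightarrow> real \<Rightarrow> real \<Rightarrow> real" where
  "vkern s x y = (1 + x\<^sup>2) powr s * vdecay s (x - y) * vdecay s y"

lemma vdecay_nonneg: "vdecay s t \<ge> 0"
  by (simp add: vdecay_def)

lemma vkern_nonneg: "vkern s x y \<ge> 0"
  by (simp add: vkern_def vdecay_def)

text \<open>Since 1 + x^2 <= 4 max(1 + (x - y)^2, 1 + y^2), the vertical kernel is dominated by
  the decay factor of whichever of x - y and y is smaller.\<close>
lemma vkern_le:
  assumes s: "s \<ge> 0"
  shows "vkern s x y \<le> 4 powr s * (vdecay s (x - y) + vdecay s y)"
proof -
  define P Q where "P = 1 + (x - y)\<^sup>2" and "Q = 1 + y\<^sup>2"
  define M m where "M = max P Q" and "m = min P Q"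
  have M: "M > 0" by (simp add: M_def P_def Q_def add_pos_nonneg max.strict_coboundedI1)
  have "x\<^sup>2 \<le> 2 * (x - y)\<^sup>2 + 2 * y\<^sup>2"
    by (smt (verit) sum_squares_bound power2_diff power2_sum)
  then have "1 + x\<^sup>2 \<le> 4 * M" by (simp add: M_def P_def Q_def max_def)
  then have "(1 + x\<^sup>2) powr s \<le> 4 powr s * M powr s"
    using s by (simp add: powr_mono2 powr_mult[symmetric])
  have PQ: "P powr (-s) * Q powr (-s) = M powr (-s) * m powr (-s)"
    by (cases "P \<le> Q") (simp_all add: M_def m_def max_def min_def mult.commute)
  have "vkern s x y = (1 + x\<^sup>2) powr s * (M powr (-s) * m powr (-s))"
    by (simp add: vkern_def vdecay_def P_def Q_def PQ[symmetric] mult.assoc)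
  also have "\<dots> \<le> (4 powr s * M powr s) * (M powr (-s) * m powr (-s))"
    using \<open>(1 + x\<^sup>2) powr s \<le> 4 powr s * M powr s\<close> by (intro mult_right_mono) auto
  also have "\<dots> = 4 powr s * m powr (-s)"
    using M by (simp add: powr_add[symmetric] mult.assoc)
  also have "\<dots> \<le> 4 powr s * (vdecay s (x - y) + vdecay s y)"
    by (intro mult_left_mono) (auto simp: m_def min_def vdecay_def P_def Q_def)
  finally show ?thesis .
qed

lemma vkern_reflect: "vkern s x (x - y) = vkern s x y"
  by (simp add: vkern_def mult_ac)

lemma hkern_reflect: "hkern \<sigma> \<tau> u (u - v) = hkern \<tau> \<sigma> u v"
  by (simp add: hkern_def add.commute mult_ac)

text \<open>The product kernel on R^3: the weight of the product at xi divided by the weights of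
  the factors at xi - eta and eta (see weight_factorization below).\<close>
definition pkern :: "real \<Rightarrow> real \<Rightarrow> real \<Rightarrow> real^3 \<Rightarrow> real^3 \<Rightarrow> real" where
  "pkern \<sigma> \<tau> s \<xi> \<eta> = hkern \<sigma> \<tau> (horiz \<xi>) (horiz \<eta>) * vkern s (vert \<xi>) (vert \<eta>)"

lemma pkern_nonneg: "pkern \<sigma> \<tau> s \<xi> \<eta> \<ge> 0"
  by (simp add: pkern_def hkern_nonneg vkern_nonneg)

definition near_kernel :: "real \<Rightarrow> real \<Rightarrow> real \<Rightarrow> real^3 \<Rightarrow> real^3 \<Rightarrow> ennreal" where
  "near_kernel \<sigma> \<tau> s \<xi> \<eta> = ennreal (sqrt (hkern_near \<sigma> \<tau> (horiz \<xi>) (horiz \<eta>) * vkern s (vert \<xi>) (vert \<eta>)))"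

lemma near_kernel_measurable [measurable]:
  "(\<lambda>(\<xi>, \<eta>). near_kernel \<sigma> \<tau> s \<xi> \<eta>) \<in> borel_measurable (borel \<Otimes>\<^sub>M borel)"
  unfolding near_kernel_def vkern_def vdecay_def by measurable

lemma sqrt_vkern_split:
  assumes h: "h \<ge> 0" and s: "s \<ge> 0"
  shows "sqrt (h * vkern s x y) \<le> 2 powr s * (sqrt h * sqrt (vdecay s (x - y)) + sqrt (vdecay s y) * sqrt h)"
proof -
  have "sqrt (h * vkern s x y) \<le> sqrt (h * (4 powr s * (vdecay s (x - y) + vdecay s y)))"
    using vkern_le[OF s] h by (intro real_sqrt_le_mono mult_left_mono)
  also have "\<dots> = 2 powr s * (sqrt h * sqrt (vdecay s (x - y) + vdecay s y))"
    using h by (simp add: real_sqrt_mult powr_mult[symmetric] powr_half_sqrt[symmetric] powr_powr mult_ac)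
  also have "\<dots> \<le> 2 powr s * (sqrt h * (sqrt (vdecay s (x - y)) + sqrt (vdecay s y)))"
    by (intro mult_left_mono sqrt_add_le_add_sqrt) (simp_all add: vdecay_nonneg h)
  finally show ?thesis by (simp add: algebra_simps)
qed

lemma ennreal_sqrt_square: "x \<ge> 0 \<Longrightarrow> (ennreal (sqrt x))\<^sup>2 = ennreal x"
  by (subst ennreal_power) auto

lemma near_mixed_integral_le:
  assumes CH: "\<And>v. (\<integral>\<^sup>+u. ennreal (hkern_near \<sigma> \<tau> u v) \<partial>lborel) \<le> ennreal CH"
  shows "(\<integral>\<^sup>+\<xi>. ennreal (hkern_near \<sigma> \<tau> (horiz \<xi>) v) * ennreal (vdecay s (vert \<xi> - c)) \<partial>lborel)
      \<le> ennreal CH * (\<integral>\<^sup>+t. ennreal (vdecay s t) \<partial>lborel)"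
proof -
  have "(\<integral>\<^sup>+\<xi>. ennreal (hkern_near \<sigma> \<tau> (horiz \<xi>) v) * ennreal (vdecay s (vert \<xi> - c)) \<partial>lborel)
      = (\<integral>\<^sup>+u. ennreal (hkern_near \<sigma> \<tau> u v) \<partial>lborel) * (\<integral>\<^sup>+t. ennreal (vdecay s t) \<partial>lborel)"
    by (rule nn_integral_horiz_vert) (simp_all add: vdecay_def)
  also have "\<dots> \<le> ennreal CH * (\<integral>\<^sup>+t. ennreal (vdecay s t) \<partial>lborel)"
    by (intro mult_right_mono CH) simp
  finally show ?thesis .
qed

text \<open>The kernel restricted to the near region is bounded. After splitting the vertical
  kernel into its two decay factors, each piece satisfies the Schur test.\<close>
lemma near_kernel_bounded:
  assumes s: "s > 1/2" and \<sigma>: "\<sigma> < 1" and \<sigma>\<tau>: "\<sigma> + \<tau> > 0"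
  shows "\<exists>C<\<infinity>. kernel_bounded (near_kernel \<sigma> \<tau> s) C"
proof -
  obtain CH where CH: "\<And>v. (\<integral>\<^sup>+u. ennreal (hkern_near \<sigma> \<tau> u v) \<partial>lborel) \<le> ennreal CH"
    using hkern_near_integral_bounded[OF \<sigma> \<sigma>\<tau>] by blast
  define CV where "CV = (\<integral>\<^sup>+t. ennreal (vdecay s t) \<partial>lborel)"
  have CV: "CV < \<infinity>"
    unfolding CV_def vdecay_def using nn_integral_bracket_finite[OF s] .
  define h where "h \<xi> \<eta> = hkern_near \<sigma> \<tau> (horiz \<xi>) (horiz \<eta>)" for \<xi> \<eta> :: "real^3"
  have h0: "h \<xi> \<eta> \<ge> 0" for \<xi> \<eta> by (simp add: h_def hkern_near_nonneg)
  define ka where "ka \<xi> \<eta> = ennreal (sqrt (h \<xi> \<eta>) * sqrt (vdecay s (vert \<xi> - vert \<eta>)))" for \<xi> \<eta>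
  define kb where "kb \<xi> \<eta> = ennreal (sqrt (vdecay s (vert \<eta>))) * ennreal (sqrt (h \<xi> \<eta>))" for \<xi> \<eta>
  have [measurable]: "(\<lambda>(x, y). ka x y) \<in> borel_measurable (borel \<Otimes>\<^sub>M borel)"
      "(\<lambda>(x, y). kb x y) \<in> borel_measurable (borel \<Otimes>\<^sub>M borel)"
    unfolding ka_def kb_def h_def vdecay_def by measurable
  have "kernel_bounded (\<lambda>\<xi> \<eta>. 1 * ka \<xi> \<eta>) (ennreal CH * CV)"
  proof (rule kernel_bounded_schur)
    fix \<zeta> \<eta> :: "real^3"
    have "(\<integral>\<^sup>+\<xi>. 1\<^sup>2 * (ka \<xi> \<eta>)\<^sup>2 \<partial>lborel)
        = (\<integral>\<^sup>+\<xi>. ennreal (h \<xi> \<eta>) * ennreal (vdecay s (vert \<xi> - vert \<eta>)) \<partial>lborel)"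
      using h0 by (intro nn_integral_cong)
        (simp add: ka_def ennreal_mult power_mult_distrib ennreal_sqrt_square vdecay_nonneg)
    also have "\<dots> \<le> ennreal CH * CV"
      unfolding h_def CV_def by (rule near_mixed_integral_le[OF CH])
    finally show "(\<integral>\<^sup>+\<xi>. 1\<^sup>2 * (ka \<xi> \<eta>)\<^sup>2 \<partial>lborel) \<le> ennreal CH * CV" .
  qed measurable
  then have a: "kernel_bounded ka (ennreal CH * CV)" by simp
  have b: "kernel_bounded (\<lambda>\<xi> \<eta>. ennreal (sqrt (vdecay s (vert \<eta>))) * ennreal (sqrt (h \<xi> \<eta>))) (ennreal CH * CV)"
  proof (rule kernel_bounded_schur)
    fix \<zeta> \<eta> :: "real^3"
    have "(\<integral>\<^sup>+\<xi>. (ennreal (sqrt (vdecay s (vert (\<xi> - \<zeta>)))))\<^sup>2 * (ennreal (sqrt (h \<xi> \<eta>)))\<^sup>2 \<partial>lborel)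
        = (\<integral>\<^sup>+\<xi>. ennreal (h \<xi> \<eta>) * ennreal (vdecay s (vert \<xi> - vert \<zeta>)) \<partial>lborel)"
      using h0 by (intro nn_integral_cong) (simp add: ennreal_sqrt_square vdecay_nonneg mult.commute)
    also have "\<dots> \<le> ennreal CH * CV"
      unfolding h_def CV_def by (rule near_mixed_integral_le[OF CH])
    finally show "(\<integral>\<^sup>+\<xi>. (ennreal (sqrt (vdecay s (vert (\<xi> - \<zeta>)))))\<^sup>2 * (ennreal (sqrt (h \<xi> \<eta>)))\<^sup>2 \<partial>lborel)
        \<le> ennreal CH * CV" .
  qed (unfold h_def vdecay_def, measurable)
  have "kernel_bounded (\<lambda>\<xi> \<eta>. ennreal (2 powr s) * (ka \<xi> \<eta> + kb \<xi> \<eta>))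
      ((ennreal (2 powr s))\<^sup>2 * (2 * (ennreal CH * CV + ennreal CH * CV)))"
    using a b[folded kb_def] by (intro kernel_bounded_cmult kernel_bounded_add) measurable
  then have "kernel_bounded (near_kernel \<sigma> \<tau> s) ((ennreal (2 powr s))\<^sup>2 * (2 * (ennreal CH * CV + ennreal CH * CV)))"
  proof (rule kernel_bounded_mono)
    fix \<xi> \<eta> :: "real^3"
    have "near_kernel \<sigma> \<tau> s \<xi> \<eta> \<le> ennreal (2 powr s * (sqrt (h \<xi> \<eta>) * sqrt (vdecay s (vert \<xi> - vert \<eta>))
        + sqrt (vdecay s (vert \<eta>)) * sqrt (h \<xi> \<eta>)))"
      unfolding near_kernel_def h_def using s hkern_near_nonneg
      by (intro ennreal_leI sqrt_vkern_split) auto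
    also have "\<dots> = ennreal (2 powr s) * (ka \<xi> \<eta> + kb \<xi> \<eta>)"
      using h0 by (simp add: ka_def kb_def vdecay_nonneg ennreal_mult'[symmetric] ennreal_plus[symmetric] del: ennreal_plus)
    finally show "near_kernel \<sigma> \<tau> s \<xi> \<eta> \<le> ennreal (2 powr s) * (ka \<xi> \<eta> + kb \<xi> \<eta>)" .
  qed
  moreover have "(ennreal (2 powr s))\<^sup>2 * (2 * (ennreal CH * CV + ennreal CH * CV)) < \<infinity>"
    using CV by (simp add: ennreal_mult_less_top ennreal_power del: ennreal_numeral)
  ultimately show ?thesis by blast
qed

text \<open>Away from the near region the roles of the two factors are exchanged, so the
  square root of the product kernel is covered by the near kernel and its reflection.\<close>
lemma sqrt_pkern_le_near:
  "ennreal (sqrt (pkern \<sigma> \<tau> s \<xi> \<eta>)) \<le> near_kernel \<sigma> \<tau> s \<xi> \<eta> + near_kernel \<tau> \<sigma> s \<xi> (\<xi> - \<eta>)"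
proof (cases "norm (horiz \<xi> - horiz \<eta>) \<le> norm (horiz \<eta>)")
  case True
  then have "ennreal (sqrt (pkern \<sigma> \<tau> s \<xi> \<eta>)) = near_kernel \<sigma> \<tau> s \<xi> \<eta>"
    by (simp add: pkern_def near_kernel_def hkern_near_def)
  then show ?thesis by simp
next
  case False
  then have "ennreal (sqrt (pkern \<sigma> \<tau> s \<xi> \<eta>)) = near_kernel \<tau> \<sigma> s \<xi> (\<xi> - \<eta>)"
    by (simp add: pkern_def near_kernel_def hkern_near_def hkern_reflect vkern_reflect)
  then show ?thesis by simp
qed

lemma pkern_bounded:
  assumes s: "s > 1/2" and \<sigma>1: "\<sigma>1 < 1" and \<sigma>2: "\<sigma>2 < 1" and \<sigma>12: "\<sigma>1 + \<sigma>2 > 0"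
  shows "\<exists>C<\<infinity>. kernel_bounded (\<lambda>\<xi> \<eta>. ennreal (sqrt (pkern \<sigma>1 \<sigma>2 s \<xi> \<eta>))) C"
proof -
  obtain C1 where C1: "C1 < \<infinity>" "kernel_bounded (near_kernel \<sigma>1 \<sigma>2 s) C1"
    using near_kernel_bounded[OF s \<sigma>1 \<sigma>12] by blast
  obtain C2 where C2: "C2 < \<infinity>" "kernel_bounded (near_kernel \<sigma>2 \<sigma>1 s) C2"
    using near_kernel_bounded[OF s \<sigma>2] \<sigma>12 by (auto simp: add.commute)
  have "kernel_bounded (\<lambda>\<xi> \<eta>. near_kernel \<sigma>1 \<sigma>2 s \<xi> \<eta> + near_kernel \<sigma>2 \<sigma>1 s \<xi> (\<xi> - \<eta>)) (2 * (C1 + C2))"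
    using C1(2) kernel_bounded_reflect[OF C2(2)] by (intro kernel_bounded_add) measurable
  then have "kernel_bounded (\<lambda>\<xi> \<eta>. ennreal (sqrt (pkern \<sigma>1 \<sigma>2 s \<xi> \<eta>))) (2 * (C1 + C2))"
    by (rule kernel_bounded_mono) (rule sqrt_pkern_le_near)
  moreover have "2 * (C1 + C2) < \<infinity>"
    using C1(1) C2(1) by (simp add: ennreal_mult_less_top)
  ultimately show ?thesis by blast
qed

lemma hweight_eq: "hweight \<sigma> s x = norm (horiz x) powr (2*\<sigma>) * (1 + (vert x)\<^sup>2) powr s"
proof -
  have "norm (horiz x) = ((x$1)\<^sup>2 + (x$2)\<^sup>2) powr (1/2)"
    by (simp add: horiz_def norm_Pair powr_half_sqrt)
  then show ?thesis by (simp add: hweight_def vert_def powr_powr)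
qed

lemma hweight_nonneg: "hweight \<sigma> s x \<ge> 0"
  by (simp add: hweight_def)

lemma hweight_measurable [measurable]: "hweight \<sigma> s \<in> borel_measurable borel"
  unfolding hweight_eq[abs_def] by measurable

lemma hweight_factorization:
  assumes n1: "horiz \<xi> \<noteq> horiz \<eta>" and n2: "horiz \<eta> \<noteq> 0"
  shows "hweight (\<sigma>1+\<sigma>2-1) s \<xi> = hweight \<sigma>1 s (\<xi> - \<eta>) * hweight \<sigma>2 s \<eta> * pkern \<sigma>1 \<sigma>2 s \<xi> \<eta>"
proof -
  have cancel: "y powr e * y powr (-e) = 1" if "y > 0" for y e :: real
    using that by (simp add: powr_add[symmetric])
  have "norm (horiz \<xi> - horiz \<eta>) > 0" "norm (horiz \<eta>) > 0" "1 + (vert \<xi> - vert \<eta>)\<^sup>2 > 0" "1 + (vert \<eta>)\<^sup>2 > 0"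
    using n1 n2 by (auto simp: add_pos_nonneg)
  note c = this[THEN cancel]
  have "hweight \<sigma>1 s (\<xi> - \<eta>) * hweight \<sigma>2 s \<eta> * pkern \<sigma>1 \<sigma>2 s \<xi> \<eta>
     = norm (horiz \<xi>) powr (2*(\<sigma>1+\<sigma>2-1)) * (1 + (vert \<xi>)\<^sup>2) powr s
       * ((norm (horiz \<xi> - horiz \<eta>) powr (2*\<sigma>1) * norm (horiz \<xi> - horiz \<eta>) powr (-(2*\<sigma>1)))
       * (norm (horiz \<eta>) powr (2*\<sigma>2) * norm (horiz \<eta>) powr (-(2*\<sigma>2)))
       * ((1 + (vert \<xi> - vert \<eta>)\<^sup>2) powr s * (1 + (vert \<xi> - vert \<eta>)\<^sup>2) powr (-s))
       * ((1 + (vert \<eta>)\<^sup>2) powr s * (1 + (vert \<eta>)\<^sup>2) powr (-s)))"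
    unfolding hweight_eq pkern_def hkern_def vkern_def vdecay_def by (simp add: mult_ac)
  also have "\<dots> = hweight (\<sigma>1+\<sigma>2-1) s \<xi>"
    unfolding c hweight_eq by simp
  finally show ?thesis ..
qed

text \<open>Hyperplanes are null sets; this makes the weight factorization hold almost everywhere.\<close>
lemma AE_first_coordinate_neq: "AE x in lborel. (x::real^3)$1 \<noteq> c"
proof -
  have "axis 1 (1::real) \<in> (Basis :: (real^3) set)" by (simp add: Basis_vec3)
  from AE_lborel_inner_neq[OF this, of c] show ?thesis by (simp add: inner_axis)
qed

lemma Hsq_eq_square: "Hsq \<sigma> s A = (\<integral>\<^sup>+\<zeta>. (ennreal (sqrt (hweight \<sigma> s \<zeta>) * cmod (A \<zeta>)))\<^sup>2 \<partial>lborel)"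
  unfolding Hsq_def
  by (intro nn_integral_cong) (simp add: ennreal_power hweight_nonneg power_mult_distrib)

definition abs_conv :: "(real^3 \<Rightarrow> complex) \<Rightarrow> (real^3 \<Rightarrow> complex) \<Rightarrow> real^3 \<Rightarrow> ennreal" where
  "abs_conv A B \<xi> = (\<integral>\<^sup>+\<eta>. ennreal (cmod (A (\<xi> - \<eta>)) * cmod (B \<eta>)) \<partial>lborel)"

lemma abs_conv_measurable [measurable]:
  assumes [measurable]: "A \<in> borel_measurable borel" "B \<in> borel_measurable borel"
  shows "abs_conv A B \<in> borel_measurable borel"
  unfolding abs_conv_def by measurable

lemma weighted_convolution_estimate:
  fixes A B :: "real^3 \<Rightarrow> complex"
  assumes K: "kernel_bounded (\<lambda>\<xi> \<eta>. ennreal (sqrt (pkern \<sigma>1 \<sigma>2 s \<xi> \<eta>))) C"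
    and [measurable]: "A \<in> borel_measurable borel" "B \<in> borel_measurable borel"
  shows "(\<integral>\<^sup>+\<xi>. ennreal (hweight (\<sigma>1+\<sigma>2-1) s \<xi>) * (abs_conv A B \<xi>)\<^sup>2 \<partial>lborel)
      \<le> C * Hsq \<sigma>1 s A * Hsq \<sigma>2 s B"
proof -
  define F where "F \<zeta> = ennreal (sqrt (hweight \<sigma>1 s \<zeta>) * cmod (A \<zeta>))" for \<zeta>
  define G where "G \<zeta> = ennreal (sqrt (hweight \<sigma>2 s \<zeta>) * cmod (B \<zeta>))" for \<zeta>
  have pointwise: "ennreal (sqrt (hweight (\<sigma>1+\<sigma>2-1) s \<xi>)) * ennreal (cmod (A (\<xi> - \<eta>)) * cmod (B \<eta>))
      = F (\<xi> - \<eta>) * G \<eta> * ennreal (sqrt (pkern \<sigma>1 \<sigma>2 s \<xi> \<eta>))"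
    if "\<eta>$1 \<noteq> \<xi>$1" "\<eta>$1 \<noteq> 0" for \<xi> \<eta>
  proof -
    have "horiz \<xi> \<noteq> horiz \<eta>" "horiz \<eta> \<noteq> 0"
      using that by (auto simp: horiz_def zero_prod_def)
    from hweight_factorization[OF this] show ?thesis
      by (simp add: F_def G_def real_sqrt_mult ennreal_mult'[symmetric] hweight_nonneg pkern_nonneg mult_ac)
  qed
  have "(\<integral>\<^sup>+\<xi>. ennreal (hweight (\<sigma>1+\<sigma>2-1) s \<xi>) * (abs_conv A B \<xi>)\<^sup>2 \<partial>lborel)
      = (\<integral>\<^sup>+\<xi>. (\<integral>\<^sup>+\<eta>. ennreal (sqrt (hweight (\<sigma>1+\<sigma>2-1) s \<xi>)) * ennreal (cmod (A (\<xi> - \<eta>)) * cmod (B \<eta>)) \<partial>lborel)\<^sup>2 \<partial>lborel)"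
    unfolding abs_conv_def by (intro nn_integral_cong)
      (simp add: nn_integral_cmult power_mult_distrib ennreal_sqrt_square hweight_nonneg)
  also have "\<dots> = (\<integral>\<^sup>+\<xi>. (\<integral>\<^sup>+\<eta>. F (\<xi> - \<eta>) * G \<eta> * ennreal (sqrt (pkern \<sigma>1 \<sigma>2 s \<xi> \<eta>)) \<partial>lborel)\<^sup>2 \<partial>lborel)"
  proof (rule nn_integral_cong)
    fix \<xi> :: "real^3"
    have "AE \<eta> in lborel. ennreal (sqrt (hweight (\<sigma>1+\<sigma>2-1) s \<xi>)) * ennreal (cmod (A (\<xi> - \<eta>)) * cmod (B \<eta>))
        = F (\<xi> - \<eta>) * G \<eta> * ennreal (sqrt (pkern \<sigma>1 \<sigma>2 s \<xi> \<eta>))"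
      using AE_first_coordinate_neq[of "\<xi>$1"] AE_first_coordinate_neq[of 0]
      by eventually_elim (rule pointwise)
    then show "(\<integral>\<^sup>+\<eta>. ennreal (sqrt (hweight (\<sigma>1+\<sigma>2-1) s \<xi>)) * ennreal (cmod (A (\<xi> - \<eta>)) * cmod (B \<eta>)) \<partial>lborel)\<^sup>2
        = (\<integral>\<^sup>+\<eta>. F (\<xi> - \<eta>) * G \<eta> * ennreal (sqrt (pkern \<sigma>1 \<sigma>2 s \<xi> \<eta>)) \<partial>lborel)\<^sup>2"
      by (simp only: nn_integral_cong_AE)
  qed
  also have "\<dots> \<le> C * (\<integral>\<^sup>+\<zeta>. (F \<zeta>)\<^sup>2 \<partial>lborel) * (\<integral>\<^sup>+\<eta>. (G \<eta>)\<^sup>2 \<partial>lborel)"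
    by (rule kernel_boundedD[OF K]) (simp_all add: F_def G_def)
  also have "\<dots> = C * Hsq \<sigma>1 s A * Hsq \<sigma>2 s B"
    by (simp add: F_def G_def Hsq_eq_square)
  finally show ?thesis .
qed

lemma exp_weight_split:
  assumes "\<Psi> \<xi> \<le> \<Psi> (\<xi> - \<eta>) + \<Psi> \<eta>"
  shows "exp (\<Psi> \<xi>) * cmod (ah (\<xi> - \<eta>) * bh \<eta>) \<le> cmod (fpsi \<Psi> ah (\<xi> - \<eta>)) * cmod (fpsi \<Psi> bh \<eta>)"
proof -
  have "exp (\<Psi> \<xi>) \<le> exp (\<Psi> (\<xi> - \<eta>)) * exp (\<Psi> \<eta>)"
    using assms by (simp add: exp_add[symmetric])
  then have "exp (\<Psi> \<xi>) * cmod (ah (\<xi> - \<eta>) * bh \<eta>) \<le> (exp (\<Psi> (\<xi> - \<eta>)) * exp (\<Psi> \<eta>)) * cmod (ah (\<xi> - \<eta>) * bh \<eta>)"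
    by (intro mult_right_mono) auto
  then show ?thesis by (simp add: fpsi_def norm_mult mult_ac)
qed

lemma norm_integral_le_nn_integral:
  fixes f :: "'a \<Rightarrow> complex"
  shows "ennreal (cmod (integral\<^sup>L M f)) \<le> (\<integral>\<^sup>+x. ennreal (cmod (f x)) \<partial>M)"
  by (cases "integrable M f") (simp_all add: integral_norm_bound_ennreal not_integrable_integral_eq)

lemma fpsi_prod_hat_le:
  assumes sub: "\<And>\<xi> \<eta>. \<Psi> \<xi> \<le> \<Psi> (\<xi> - \<eta>) + \<Psi> \<eta>"
    and [measurable]: "ah \<in> borel_measurable borel" "bh \<in> borel_measurable borel"
  shows "ennreal (cmod (fpsi \<Psi> (prod_hat ah bh) \<xi>))
      \<le> ennreal (1 / (2*pi)^3) * abs_conv (fpsi \<Psi> ah) (fpsi \<Psi> bh) \<xi>"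
proof -
  have "ennreal (cmod (fpsi \<Psi> (prod_hat ah bh) \<xi>))
      = ennreal (1 / (2*pi)^3) * (ennreal (exp (\<Psi> \<xi>)) * ennreal (cmod (\<integral>\<eta>. ah (\<xi> - \<eta>) * bh \<eta> \<partial>lborel)))"
    by (simp add: fpsi_def prod_hat_def norm_mult norm_divide norm_power ennreal_mult'[symmetric] mult_ac)
  also have "\<dots> \<le> ennreal (1 / (2*pi)^3) * (ennreal (exp (\<Psi> \<xi>)) * (\<integral>\<^sup>+\<eta>. ennreal (cmod (ah (\<xi> - \<eta>) * bh \<eta>)) \<partial>lborel))"
    by (intro mult_left_mono norm_integral_le_nn_integral) auto
  also have "ennreal (exp (\<Psi> \<xi>)) * (\<integral>\<^sup>+\<eta>. ennreal (cmod (ah (\<xi> - \<eta>) * bh \<eta>)) \<partial>lborel)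
      = (\<integral>\<^sup>+\<eta>. ennreal (exp (\<Psi> \<xi>) * cmod (ah (\<xi> - \<eta>) * bh \<eta>)) \<partial>lborel)"
    by (subst nn_integral_cmult[symmetric]) (measurable, simp add: ennreal_mult)
  also have "\<dots> \<le> abs_conv (fpsi \<Psi> ah) (fpsi \<Psi> bh) \<xi>"
    unfolding abs_conv_def by (intro nn_integral_mono ennreal_leI exp_weight_split sub)
  finally show ?thesis by (simp add: mult_left_mono)
qed

lemma integrable_conv_if_abs_conv_finite:
  assumes sub: "\<And>\<xi> \<eta>. \<Psi> \<xi> \<le> \<Psi> (\<xi> - \<eta>) + \<Psi> \<eta>"
    and [measurable]: "ah \<in> borel_measurable borel" "bh \<in> borel_measurable borel"
      "fpsi \<Psi> ah \<in> borel_measurable borel" "fpsi \<Psi> bh \<in> borel_measurable borel"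
    and fin: "abs_conv (fpsi \<Psi> ah) (fpsi \<Psi> bh) \<xi> < \<infinity>"
  shows "integrable lborel (\<lambda>\<eta>. ah (\<xi> - \<eta>) * bh \<eta>)"
proof (rule integrableI_bounded)
  have "(\<integral>\<^sup>+\<eta>. ennreal (norm (ah (\<xi> - \<eta>) * bh \<eta>)) \<partial>lborel)
      \<le> (\<integral>\<^sup>+\<eta>. ennreal (exp (- \<Psi> \<xi>)) * ennreal (cmod (fpsi \<Psi> ah (\<xi> - \<eta>)) * cmod (fpsi \<Psi> bh \<eta>)) \<partial>lborel)"
  proof (intro nn_integral_mono)
    fix \<eta>
    have "norm (ah (\<xi> - \<eta>) * bh \<eta>) = exp (- \<Psi> \<xi>) * (exp (\<Psi> \<xi>) * cmod (ah (\<xi> - \<eta>) * bh \<eta>))"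
      by (simp add: exp_minus field_simps)
    also have "\<dots> \<le> exp (- \<Psi> \<xi>) * (cmod (fpsi \<Psi> ah (\<xi> - \<eta>)) * cmod (fpsi \<Psi> bh \<eta>))"
      by (intro mult_left_mono exp_weight_split sub) simp
    finally show "ennreal (norm (ah (\<xi> - \<eta>) * bh \<eta>))
        \<le> ennreal (exp (- \<Psi> \<xi>)) * ennreal (cmod (fpsi \<Psi> ah (\<xi> - \<eta>)) * cmod (fpsi \<Psi> bh \<eta>))"
      by (simp add: ennreal_mult'[symmetric] ennreal_leI)
  qed
  also have "\<dots> = ennreal (exp (- \<Psi> \<xi>)) * abs_conv (fpsi \<Psi> ah) (fpsi \<Psi> bh) \<xi>"
    unfolding abs_conv_def by (rule nn_integral_cmult) measurable
  also have "\<dots> < \<infinity>"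
    using fin by (simp add: ennreal_mult_less_top)
  finally show "(\<integral>\<^sup>+\<eta>. ennreal (norm (ah (\<xi> - \<eta>) * bh \<eta>)) \<partial>lborel) < \<infinity>" .
qed measurable

lemma Hsq_product_le:
  assumes K: "kernel_bounded (\<lambda>\<xi> \<eta>. ennreal (sqrt (pkern \<sigma>1 \<sigma>2 s \<xi> \<eta>))) C"
    and sub: "\<And>\<xi> \<eta>. \<Psi> \<xi> \<le> \<Psi> (\<xi> - \<eta>) + \<Psi> \<eta>"
    and [measurable]: "ah \<in> borel_measurable borel" "bh \<in> borel_measurable borel"
      "fpsi \<Psi> ah \<in> borel_measurable borel" "fpsi \<Psi> bh \<in> borel_measurable borel"
  shows "Hsq (\<sigma>1+\<sigma>2-1) s (fpsi \<Psi> (prod_hat ah bh))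
      \<le> ennreal ((1 / (2*pi)^3)\<^sup>2) * (C * Hsq \<sigma>1 s (fpsi \<Psi> ah) * Hsq \<sigma>2 s (fpsi \<Psi> bh))"
proof -
  define c :: real where "c = 1 / (2*pi)^3"
  define w where "w = hweight (\<sigma>1+\<sigma>2-1) s"
  have "Hsq (\<sigma>1+\<sigma>2-1) s (fpsi \<Psi> (prod_hat ah bh))
      \<le> (\<integral>\<^sup>+\<xi>. ennreal (c\<^sup>2) * (ennreal (w \<xi>) * (abs_conv (fpsi \<Psi> ah) (fpsi \<Psi> bh) \<xi>)\<^sup>2) \<partial>lborel)"
    unfolding Hsq_def
  proof (intro nn_integral_mono)
    fix \<xi>
    have "ennreal (w \<xi> * (cmod (fpsi \<Psi> (prod_hat ah bh) \<xi>))\<^sup>2)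
        = ennreal (w \<xi>) * (ennreal (cmod (fpsi \<Psi> (prod_hat ah bh) \<xi>)))\<^sup>2"
      by (simp add: w_def hweight_nonneg ennreal_mult ennreal_power)
    also have "\<dots> \<le> ennreal (w \<xi>) * (ennreal c * abs_conv (fpsi \<Psi> ah) (fpsi \<Psi> bh) \<xi>)\<^sup>2"
      unfolding c_def by (intro mult_left_mono power_mono_ennreal fpsi_prod_hat_le sub) simp_all
    also have "\<dots> = ennreal (c\<^sup>2) * (ennreal (w \<xi>) * (abs_conv (fpsi \<Psi> ah) (fpsi \<Psi> bh) \<xi>)\<^sup>2)"
      by (simp add: c_def power_mult_distrib ennreal_power mult_ac)
    finally show "ennreal (hweight (\<sigma>1+\<sigma>2-1) s \<xi> * (cmod (fpsi \<Psi> (prod_hat ah bh) \<xi>))\<^sup>2)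
        \<le> ennreal (c\<^sup>2) * (ennreal (w \<xi>) * (abs_conv (fpsi \<Psi> ah) (fpsi \<Psi> bh) \<xi>)\<^sup>2)"
      by (simp add: w_def)
  qed
  also have "\<dots> = ennreal (c\<^sup>2) * (\<integral>\<^sup>+\<xi>. ennreal (w \<xi>) * (abs_conv (fpsi \<Psi> ah) (fpsi \<Psi> bh) \<xi>)\<^sup>2 \<partial>lborel)"
    unfolding w_def by (rule nn_integral_cmult) measurable
  also have "\<dots> \<le> ennreal (c\<^sup>2) * (C * Hsq \<sigma>1 s (fpsi \<Psi> ah) * Hsq \<sigma>2 s (fpsi \<Psi> bh))"
    unfolding w_def by (intro mult_left_mono weighted_convolution_estimate[OF K]) simp_all
  finally show ?thesis by (simp add: c_def)
qed

text \<open>Since the weight of the product is positive almost everywhere, finiteness of the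
  weighted convolution estimate forces the convolution of the moduli, and hence the
  convolution integral, to be finite almost everywhere.\<close>
lemma AE_integrable_product:
  assumes K: "kernel_bounded (\<lambda>\<xi> \<eta>. ennreal (sqrt (pkern \<sigma>1 \<sigma>2 s \<xi> \<eta>))) C" and C: "C < \<infinity>"
    and sub: "\<And>\<xi> \<eta>. \<Psi> \<xi> \<le> \<Psi> (\<xi> - \<eta>) + \<Psi> \<eta>"
    and meas [measurable]: "ah \<in> borel_measurable borel" "bh \<in> borel_measurable borel"
      "fpsi \<Psi> ah \<in> borel_measurable borel" "fpsi \<Psi> bh \<in> borel_measurable borel"
    and H1: "Hsq \<sigma>1 s (fpsi \<Psi> ah) < \<infinity>" and H2: "Hsq \<sigma>2 s (fpsi \<Psi> bh) < \<infinity>"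
  shows "AE \<xi> in lborel. integrable lborel (\<lambda>\<eta>. ah (\<xi> - \<eta>) * bh \<eta>)"
proof -
  define Cv where "Cv = abs_conv (fpsi \<Psi> ah) (fpsi \<Psi> bh)"
  have "(\<integral>\<^sup>+\<xi>. ennreal (hweight (\<sigma>1+\<sigma>2-1) s \<xi>) * (Cv \<xi>)\<^sup>2 \<partial>lborel)
      \<le> C * Hsq \<sigma>1 s (fpsi \<Psi> ah) * Hsq \<sigma>2 s (fpsi \<Psi> bh)"
    unfolding Cv_def by (rule weighted_convolution_estimate[OF K]) simp_all
  also have "\<dots> < \<infinity>"
    using C H1 H2 by (simp add: ennreal_mult_less_top)
  finally have "AE \<xi> in lborel. ennreal (hweight (\<sigma>1+\<sigma>2-1) s \<xi>) * (Cv \<xi>)\<^sup>2 \<noteq> \<infinity>"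
    by (intro nn_integral_PInf_AE) (simp_all add: Cv_def)
  with AE_first_coordinate_neq[of 0] show ?thesis
  proof eventually_elim
    case (elim \<xi>)
    have "norm (horiz \<xi>) > 0" "1 + (vert \<xi>)\<^sup>2 > 0"
      using norm_horiz_pos[of \<xi>] elim(1) by (simp_all add: add_pos_nonneg)
    then have "hweight (\<sigma>1+\<sigma>2-1) s \<xi> > 0"
      unfolding hweight_eq by (intro mult_pos_pos) simp_all
    with elim(2) have "Cv \<xi> < \<infinity>"
      by (auto simp: ennreal_mult_eq_top_iff power_eq_top_ennreal less_top)
    then show ?case
      unfolding Cv_def by (rule integrable_conv_if_abs_conv_finite[OF sub meas])
  qed
qed

lemma Hnorm_le_of_Hsq_le:
  assumes le: "Hsq \<sigma> s P \<le> ennreal (c\<^sup>2) * (K * Hsq \<sigma>1 s A * Hsq \<sigma>2 s B)"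
    and c: "c \<ge> 0" and fin: "K < \<infinity>" "Hsq \<sigma>1 s A < \<infinity>" "Hsq \<sigma>2 s B < \<infinity>"
  shows "Hnorm \<sigma> s P \<le> c * sqrt (enn2real K) * Hnorm \<sigma>1 s A * Hnorm \<sigma>2 s B"
proof -
  have "enn2real (Hsq \<sigma> s P) \<le> enn2real (ennreal (c\<^sup>2) * (K * Hsq \<sigma>1 s A * Hsq \<sigma>2 s B))"
    using le fin by (intro enn2real_mono) (auto simp: ennreal_mult_less_top)
  also have "\<dots> = c\<^sup>2 * enn2real K * enn2real (Hsq \<sigma>1 s A) * enn2real (Hsq \<sigma>2 s B)"
    by (simp add: enn2real_mult mult_ac)
  finally have "sqrt (enn2real (Hsq \<sigma> s P)) \<le> sqrt (c\<^sup>2 * enn2real K * enn2real (Hsq \<sigma>1 s A) * enn2real (Hsq \<sigma>2 s B))"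
    by (rule real_sqrt_le_mono)
  then show ?thesis
    using c by (simp add: Hnorm_def real_sqrt_mult)
qed

text \<open>The main theorem: the constant comes from the kernel bound and depends only on s,
  sigma1, sigma2.\<close>
theorem lemma4p3:
  fixes s \<sigma>1 \<sigma>2 :: real
  assumes "s > 1/2" and "\<sigma>1 < 1" and "\<sigma>2 < 1" and "\<sigma>1 + \<sigma>2 > 0"
  shows "\<exists>C::real. \<forall>(\<Psi>::real^3 \<Rightarrow> real) (ah::real^3 \<Rightarrow> complex) (bh::real^3 \<Rightarrow> complex).
     locally_bounded \<Psi> \<and> (\<forall>\<xi> \<eta>. \<Psi> \<xi> \<le> \<Psi> (\<xi> - \<eta>) + \<Psi> \<eta>) \<and>
     ah \<in> borel_measurable lborel \<and> bh \<in> borel_measurable lborel \<and>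
     fpsi \<Psi> ah \<in> borel_measurable lborel \<and> fpsi \<Psi> bh \<in> borel_measurable lborel \<and>
     inH \<sigma>1 s (fpsi \<Psi> ah) \<and> inH \<sigma>2 s (fpsi \<Psi> bh)
     \<longrightarrow> (AE \<xi> in lborel. integrable lborel (\<lambda>\<eta>. ah (\<xi> - \<eta>) * bh \<eta>)) \<and>
         inH (\<sigma>1 + \<sigma>2 - 1) s (fpsi \<Psi> (prod_hat ah bh)) \<and>
         Hnorm (\<sigma>1 + \<sigma>2 - 1) s (fpsi \<Psi> (prod_hat ah bh))
           \<le> C * Hnorm \<sigma>1 s (fpsi \<Psi> ah) * Hnorm \<sigma>2 s (fpsi \<Psi> bh)"
proof -
  obtain K where K: "K < \<infinity>" "kernel_bounded (\<lambda>\<xi> \<eta>. ennreal (sqrt (pkern \<sigma>1 \<sigma>2 s \<xi> \<eta>))) K"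
    using pkern_bounded[OF assms] by blast
  show ?thesis
  proof (intro exI[of _ "1 / (2*pi)^3 * sqrt (enn2real K)"] allI impI)
    fix \<Psi> :: "real^3 \<Rightarrow> real" and ah bh :: "real^3 \<Rightarrow> complex"
    assume H: "locally_bounded \<Psi> \<and> (\<forall>\<xi> \<eta>. \<Psi> \<xi> \<le> \<Psi> (\<xi> - \<eta>) + \<Psi> \<eta>) \<and>
      ah \<in> borel_measurable lborel \<and> bh \<in> borel_measurable lborel \<and>
      fpsi \<Psi> ah \<in> borel_measurable lborel \<and> fpsi \<Psi> bh \<in> borel_measurable lborel \<and>
      inH \<sigma>1 s (fpsi \<Psi> ah) \<and> inH \<sigma>2 s (fpsi \<Psi> bh)"
    then have sub: "\<And>\<xi> \<eta>. \<Psi> \<xi> \<le> \<Psi> (\<xi> - \<eta>) + \<Psi> \<eta>"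
      and meas: "ah \<in> borel_measurable borel" "bh \<in> borel_measurable borel"
        "fpsi \<Psi> ah \<in> borel_measurable borel" "fpsi \<Psi> bh \<in> borel_measurable borel"
      and fin: "Hsq \<sigma>1 s (fpsi \<Psi> ah) < \<infinity>" "Hsq \<sigma>2 s (fpsi \<Psi> bh) < \<infinity>"
      by (auto simp: inH_def)
    have P: "Hsq (\<sigma>1+\<sigma>2-1) s (fpsi \<Psi> (prod_hat ah bh))
        \<le> ennreal ((1 / (2*pi)^3)\<^sup>2) * (K * Hsq \<sigma>1 s (fpsi \<Psi> ah) * Hsq \<sigma>2 s (fpsi \<Psi> bh))"
      by (rule Hsq_product_le[OF K(2) sub meas])
    have "Hsq (\<sigma>1+\<sigma>2-1) s (fpsi \<Psi> (prod_hat ah bh)) < \<infinity>"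
      using P K(1) fin by (auto simp: ennreal_mult_less_top intro: le_less_trans)
    then show "(AE \<xi> in lborel. integrable lborel (\<lambda>\<eta>. ah (\<xi> - \<eta>) * bh \<eta>)) \<and>
        inH (\<sigma>1 + \<sigma>2 - 1) s (fpsi \<Psi> (prod_hat ah bh)) \<and>
        Hnorm (\<sigma>1 + \<sigma>2 - 1) s (fpsi \<Psi> (prod_hat ah bh))
          \<le> 1 / (2*pi)^3 * sqrt (enn2real K) * Hnorm \<sigma>1 s (fpsi \<Psi> ah) * Hnorm \<sigma>2 s (fpsi \<Psi> bh)"
      using AE_integrable_product[OF K(2) K(1) sub meas fin] Hnorm_le_of_Hsq_le[OF P _ K(1) fin]
      by (simp add: inH_def)
  qed
qed

end
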